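(* In the setting below, the rank of the free abelian group $\bar A_{\mathfrak{ab}}/\bar\rho_{\mathfrak{ab}}(\bar G_{\mathfrak{ab}})$ is $\sum_{i=1}^m|S_i|-n-m+c$, where $c$ is the number of connected components of the graph $\Lambda_{\mathcal X}$.
   Context: Let $G$ be a group generated by $a_1,\dots,a_n$ with $z=a_1\cdots a_n$ central. Let $\mathcal X=\{S_1,\dots,S_m\}$ with $S_i\subseteq\{1,\dots,n\}$ and $|S_i\cap S_r|\le1$ for $i\neq r$. For $S\subseteq\{1,\dots,n\}$ let $G_S$ be the quotient of $G$ by the normal closure of $\{a_j:j\notin S\}$; let $a_{ij}$ be the image of $a_j$ in $G_{S_i}$ and $z_i=a_{i1}\cdots a_{in}$ (central in $G_{S_i}$). Let $\bar G=G/\langle z\rangle$, $\bar G_{S_i}=G_{S_i}/\langle z_i\rangle$, and assume each $\bar G_{S_i}$ is free of rank $|S_i|-1$, the images of any $|S_i|-1$ of the $a_{ij}$, $j\in S_i$, forming a free basis. Let $A=\prod_iG_{S_i}$, $\bar A=\prod_i\bar G_{S_i}$, $\rho\colon G\to A$ the product of projections and $\bar\rho\colon\bar G\to\bar A$ the induced map. Assume $G_{\mathfrak{ab}}$ and $A_{\mathfrak{ab}}$ are free abelian with bases the images of $a_1,\dots,a_n$ and of $a_{ij}$ ($1\le i\le m$, $j\in S_i$) respectively; $\mathfrak{ab}$ denotes abelianization. $\Lambda_{\mathcal X}$ is the bipartite graph with vertex set $\{S_1,\dots,S_m\}\sqcup\{1,\dots,n\}$ and an edge $\{S_i,j\}$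 for each $j\in S_i$. *)

theory Defs
  imports "HOL-Algebra.Algebra"
begin

definition normal_closure :: "('a, 'b) monoid_scheme \<Rightarrow> 'a set \<Rightarrow> 'a set" where
  "normal_closure G Y =
     generate G {g \<otimes>\<^bsub>G\<^esub> x \<otimes>\<^bsub>G\<^esub> inv\<^bsub>G\<^esub> g | g x. g \<in> carrier G \<and> x \<in> Y}"

definition abelianization :: "('a, 'b) monoid_scheme \<Rightarrow> 'a set monoid" where
  "abelianization G = G Mod (derived G (carrier G))"

definition free_abelian_basis :: "('a, 'b) monoid_scheme \<Rightarrow> 'i set \<Rightarrow> ('i \<Rightarrow> 'a) \<Rightarrow> bool" where
  "free_abelian_basis H J b \<longleftrightarrow>
     comm_group H \<and> finite J \<and> b \<in> J \<rightarrow> carrier H \<and>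
     bij_betw (\<lambda>k. finprod H (\<lambda>j. b j [^]\<^bsub>H\<^esub> (k j :: int)) J)
              (J \<rightarrow>\<^sub>E (UNIV :: int set)) (carrier H)"

definition word_eval :: "('a, 'b) monoid_scheme \<Rightarrow> ('i \<Rightarrow> 'a) \<Rightarrow> ('i \<times> bool) list \<Rightarrow> 'a" where
  "word_eval H b w =
     foldr (\<lambda>(j, s) acc. (if s then b j else inv\<^bsub>H\<^esub> (b j)) \<otimes>\<^bsub>H\<^esub> acc) w \<one>\<^bsub>H\<^esub>"

definition reduced_word :: "('i \<times> bool) list \<Rightarrow> bool" where
  "reduced_word w \<longleftrightarrow>
     (\<forall>k. Suc k < length w \<longrightarrow>
        \<not> (fst (w ! k) = fst (w ! Suc k) \<and> snd (w ! k) \<noteq> snd (w ! Suc k)))"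

definition free_basis :: "('a, 'b) monoid_scheme \<Rightarrow> 'i set \<Rightarrow> ('i \<Rightarrow> 'a) \<Rightarrow> bool" where
  "free_basis H J b \<longleftrightarrow>
     group H \<and> b \<in> J \<rightarrow> carrier H \<and> inj_on b J \<and> generate H (b ` J) = carrier H \<and>
     (\<forall>w. w \<noteq> [] \<and> set (map fst w) \<subseteq> J \<and> reduced_word w \<longrightarrow> word_eval H b w \<noteq> \<one>\<^bsub>H\<^esub>)"

definition free_of_rank :: "('a, 'b) monoid_scheme \<Rightarrow> nat \<Rightarrow> bool" where
  "free_of_rank H r \<longleftrightarrow> (\<exists>B. finite B \<and> card B = r \<and> free_basis H B id)"

definition prod_gens :: "('a, 'b) monoid_scheme \<Rightarrow> (nat \<Rightarrow> 'a) \<Rightarrow> nat \<Rightarrow> 'a" where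
  "prod_gens G a n = foldr (\<otimes>\<^bsub>G\<^esub>) (map a [1..<Suc n]) \<one>\<^bsub>G\<^esub>"

definition kerS :: "('a, 'b) monoid_scheme \<Rightarrow> (nat \<Rightarrow> 'a) \<Rightarrow> nat \<Rightarrow> nat set \<Rightarrow> 'a set" where
  "kerS G a n S = normal_closure G (a ` ({1..n} - S))"

definition GS :: "('a, 'b) monoid_scheme \<Rightarrow> (nat \<Rightarrow> 'a) \<Rightarrow> nat \<Rightarrow> nat set \<Rightarrow> 'a set monoid" where
  "GS G a n S = G Mod (kerS G a n S)"

definition aS :: "('a, 'b) monoid_scheme \<Rightarrow> (nat \<Rightarrow> 'a) \<Rightarrow> nat \<Rightarrow> nat set \<Rightarrow> nat \<Rightarrow> 'a set" where
  "aS G a n S j = kerS G a n S #>\<^bsub>G\<^esub> a j"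

definition zS :: "('a, 'b) monoid_scheme \<Rightarrow> (nat \<Rightarrow> 'a) \<Rightarrow> nat \<Rightarrow> nat set \<Rightarrow> 'a set" where
  "zS G a n S = prod_gens (GS G a n S) (aS G a n S) n"

definition Gbar :: "('a, 'b) monoid_scheme \<Rightarrow> (nat \<Rightarrow> 'a) \<Rightarrow> nat \<Rightarrow> 'a set monoid" where
  "Gbar G a n = G Mod (generate G {prod_gens G a n})"

definition GbarS :: "('a, 'b) monoid_scheme \<Rightarrow> (nat \<Rightarrow> 'a) \<Rightarrow> nat \<Rightarrow> nat set \<Rightarrow> 'a set set monoid" where
  "GbarS G a n S = GS G a n S Mod (generate (GS G a n S) {zS G a n S})"

definition abarS :: "('a, 'b) monoid_scheme \<Rightarrow> (nat \<Rightarrow> 'a) \<Rightarrow> nat \<Rightarrow> nat set \<Rightarrow> nat \<Rightarrow> 'a set set" where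
  "abarS G a n S j = generate (GS G a n S) {zS G a n S} #>\<^bsub>GS G a n S\<^esub> aS G a n S j"

definition Aprod :: "('a, 'b) monoid_scheme \<Rightarrow> (nat \<Rightarrow> 'a) \<Rightarrow> nat \<Rightarrow> nat \<Rightarrow> (nat \<Rightarrow> nat set)
    \<Rightarrow> (nat \<Rightarrow> 'a set) monoid" where
  "Aprod G a n m S = product_group {1..m} (\<lambda>i. GS G a n (S i))"

definition Abar :: "('a, 'b) monoid_scheme \<Rightarrow> (nat \<Rightarrow> 'a) \<Rightarrow> nat \<Rightarrow> nat \<Rightarrow> (nat \<Rightarrow> nat set)
    \<Rightarrow> (nat \<Rightarrow> 'a set set) monoid" where
  "Abar G a n m S = product_group {1..m} (\<lambda>i. GbarS G a n (S i))"

definition aA :: "('a, 'b) monoid_scheme \<Rightarrow> (nat \<Rightarrow> 'a) \<Rightarrow> nat \<Rightarrow> nat \<Rightarrow> (nat \<Rightarrow> nat set)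
    \<Rightarrow> nat \<times> nat \<Rightarrow> nat \<Rightarrow> 'a set" where
  "aA G a n m S ij = (\<lambda>i'\<in>{1..m}. if i' = fst ij then aS G a n (S i') (snd ij)
                                   else \<one>\<^bsub>GS G a n (S i')\<^esub>)"

definition rho_bar :: "('a, 'b) monoid_scheme \<Rightarrow> (nat \<Rightarrow> 'a) \<Rightarrow> nat \<Rightarrow> nat \<Rightarrow> (nat \<Rightarrow> nat set)
    \<Rightarrow> 'a set \<Rightarrow> nat \<Rightarrow> 'a set set" where
  "rho_bar G a n m S C =
     (\<lambda>i\<in>{1..m}. generate (GS G a n (S i)) {zS G a n (S i)}
                   #>\<^bsub>GS G a n (S i)\<^esub> (kerS G a n (S i) #>\<^bsub>G\<^esub> (SOME g. g \<in> C)))"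

definition rho_bar_ab :: "('a, 'b) monoid_scheme \<Rightarrow> (nat \<Rightarrow> 'a) \<Rightarrow> nat \<Rightarrow> nat \<Rightarrow> (nat \<Rightarrow> nat set)
    \<Rightarrow> 'a set set \<Rightarrow> (nat \<Rightarrow> 'a set set) set" where
  "rho_bar_ab G a n m S x =
     derived (Abar G a n m S) (carrier (Abar G a n m S))
       #>\<^bsub>Abar G a n m S\<^esub> rho_bar G a n m S (SOME C. C \<in> x)"

definition Lambda_vertices :: "nat \<Rightarrow> nat \<Rightarrow> (nat + nat) set" where
  "Lambda_vertices m n = Inl ` {1..m} \<union> Inr ` {1..n}"

definition Lambda_edges :: "nat \<Rightarrow> (nat \<Rightarrow> nat set) \<Rightarrow> ((nat + nat) \<times> (nat + nat)) set" where
  "Lambda_edges m S = {(Inl i, Inr j) | i j. i \<in> {1..m} \<and> j \<in> S i}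
                    \<union> {(Inr j, Inl i) | i j. i \<in> {1..m} \<and> j \<in> S i}"

definition num_components :: "'v set \<Rightarrow> ('v \<times> 'v) set \<Rightarrow> nat" where
  "num_components V E = card (V // ((E\<^sup>* ) \<inter> (V \<times> V)))"

end

theory Submission
  imports Defs "HOL-Library.Function_Algebras"
begin

text \<open>The abelianization of \<open>Abar\<close> is the free abelian group on the edges \<open>(i, j)\<close>,
  \<open>j \<in> S i\<close>, of \<open>\<Lambda>\<close> modulo the images of the central elements \<open>z_i\<close>, which are the
  vectors \<open>\<Sum>j\<in>S i. e_ij\<close>; the image of \<open>Gbar_ab\<close> is spanned by the images of the generators,
  the vectors \<open>\<Sum>i. e_ij\<close> with \<open>j \<in> S i\<close>. Both kinds of vectors are coboundaries of functions on the
  vertices of \<open>\<Lambda>\<close>, so the quotient is the cokernel of the coboundary map of \<open>\<Lambda>\<close>. Adding the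
  edges one at a time, an edge joining two components merges them while an edge closing a cycle
  contributes a free coordinate; hence the cokernel is free of rank
  \<open>|edges| - |vertices| + c = \<Sum>|S i| - n - m + c\<close>.\<close>

section \<open>Cokernel of the coboundary map of a finite graph\<close>

definition supported_on :: "'a set \<Rightarrow> ('a \<Rightarrow> int) set" where
  "supported_on A = {f. \<forall>x. x \<notin> A \<longrightarrow> f x = 0}"

definition additive_on :: "('a \<Rightarrow> int) set \<Rightarrow> (('a \<Rightarrow> int) \<Rightarrow> ('b \<Rightarrow> int)) \<Rightarrow> bool" where
  "additive_on A F \<longleftrightarrow> (\<forall>f\<in>A. \<forall>f'\<in>A. F (f + f') = F f + F f')"

definition coboundary :: "'e set \<Rightarrow> ('e \<Rightarrow> 'v) \<Rightarrow> ('e \<Rightarrow> 'v) \<Rightarrow> ('v \<Rightarrow> int) \<Rightarrow> 'e \<Rightarrow> int" where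
  "coboundary D src tgt g = (\<lambda>e. if e \<in> D then g (src e) - g (tgt e) else 0)"

definition edge_rel :: "'e set \<Rightarrow> ('e \<Rightarrow> 'v) \<Rightarrow> ('e \<Rightarrow> 'v) \<Rightarrow> ('v \<times> 'v) set" where
  "edge_rel D src tgt = {(src e, tgt e) | e. e \<in> D} \<union> {(tgt e, src e) | e. e \<in> D}"

lemma supported_on_add: "f \<in> supported_on A \<Longrightarrow> g \<in> supported_on A \<Longrightarrow> f + g \<in> supported_on A"
  by (auto simp: supported_on_def)

lemma supported_onD: "f \<in> supported_on A \<Longrightarrow> x \<notin> A \<Longrightarrow> f x = 0"
  by (simp add: supported_on_def)

lemma supported_on_mono: "f \<in> supported_on A \<Longrightarrow> A \<subseteq> B \<Longrightarrow> f \<in> supported_on B"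
  by (auto simp: supported_on_def)

lemma fun_upd_zero_supported_on: "f \<in> supported_on (insert e A) \<Longrightarrow> f(e := 0) \<in> supported_on A"
  by (auto simp: supported_on_def)

lemma supported_on_eqI:
  assumes "f \<in> supported_on A" "g \<in> supported_on A" "\<And>x. x \<in> A \<Longrightarrow> f x = g x"
  shows "f = g"
proof
  fix x show "f x = g x"
  proof (cases "x \<in> A")
    case False then show ?thesis using assms(1,2) by (simp add: supported_onD)
  qed (rule assms(3))
qed

lemma additive_onD: "additive_on A F \<Longrightarrow> f \<in> A \<Longrightarrow> g \<in> A \<Longrightarrow> F (f + g) = F f + F g"
  by (simp add: additive_on_def)

lemma additive_on_fun_upd_zero:
  assumes "additive_on (supported_on A) F"
  shows "additive_on (supported_on (insert e A)) (\<lambda>f. F (f(e := 0)))"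
proof -
  have "(f + g)(e := 0) = f(e := 0) + g(e := 0)" for f g :: "_ \<Rightarrow> int" by auto
  then show ?thesis
    using additive_onD[OF assms fun_upd_zero_supported_on fun_upd_zero_supported_on]
    unfolding additive_on_def by simp
qed

lemma coboundary_in_supported_on: "coboundary D src tgt g \<in> supported_on D"
  by (simp add: coboundary_def supported_on_def)

lemma coboundary_diff: "coboundary D src tgt (g - g') = coboundary D src tgt g - coboundary D src tgt g'"
  by (auto simp: coboundary_def)

lemma coboundary_insert_fun_upd:
  "e \<notin> D \<Longrightarrow> (coboundary (insert e D) src tgt g)(e := 0) = coboundary D src tgt g"
  by (auto simp: coboundary_def)

lemma edge_rel_insert:
  "edge_rel (insert e D) src tgt = edge_rel D src tgt \<union> {(src e, tgt e), (tgt e, src e)}"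
  by (auto simp: edge_rel_def)

lemma sym_rtrancl_edge_rel: "sym ((edge_rel D src tgt)\<^sup>*)"
  by (rule sym_rtrancl) (auto simp: edge_rel_def sym_def)

lemma equiv_rtrancl_edge_rel: "equiv V ((edge_rel D src tgt)\<^sup>* \<inter> V \<times> V)"
  using sym_rtrancl_edge_rel[of D src tgt]
  by (intro equivI refl_onI symI transI) (auto dest: symD intro: rtrancl_trans)

lemma coboundary_zero_const:
  assumes "coboundary D src tgt g = 0" and "(u, w) \<in> (edge_rel D src tgt)\<^sup>*"
  shows "g u = g w"
  using assms(2)
proof (induction rule: rtrancl_induct)
  case (step v t)
  have "g (src d) = g (tgt d)" if "d \<in> D" for d
    using fun_cong[OF assms(1), of d] that by (simp add: coboundary_def)
  then show ?case using step by (auto simp: edge_rel_def)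
qed simp

lemma rtrancl_edge_rel_insert_cycle:
  assumes "(src e, tgt e) \<in> (edge_rel D src tgt)\<^sup>*"
  shows "(edge_rel (insert e D) src tgt)\<^sup>* = (edge_rel D src tgt)\<^sup>*"
proof
  have "(tgt e, src e) \<in> (edge_rel D src tgt)\<^sup>*"
    using assms sym_rtrancl_edge_rel by (metis symD)
  then have "edge_rel (insert e D) src tgt \<subseteq> (edge_rel D src tgt)\<^sup>*"
    using assms by (auto simp: edge_rel_insert)
  then show "(edge_rel (insert e D) src tgt)\<^sup>* \<subseteq> (edge_rel D src tgt)\<^sup>*"
    by (metis rtrancl_subset_rtrancl)
  show "(edge_rel D src tgt)\<^sup>* \<subseteq> (edge_rel (insert e D) src tgt)\<^sup>*"
    by (rule rtrancl_mono) (auto simp: edge_rel_insert)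
qed

lemma rtrancl_edge_rel_insert_bridge:
  fixes D src tgt defines "R \<equiv> (edge_rel D src tgt)\<^sup>*"
  assumes bridge: "(src e, tgt e) \<notin> R"
  shows "(u, w) \<in> (edge_rel (insert e D) src tgt)\<^sup>* \<longleftrightarrow>
    (u, w) \<in> R \<or> ((u, src e) \<in> R \<and> (tgt e, w) \<in> R) \<or> ((u, tgt e) \<in> R \<and> (src e, w) \<in> R)"
proof
  have sym: "(b, a) \<in> R" if "(a, b) \<in> R" for a b
    using that sym_rtrancl_edge_rel unfolding R_def by (metis symD)
  assume "(u, w) \<in> (edge_rel (insert e D) src tgt)\<^sup>*"
  then show "(u, w) \<in> R \<or> ((u, src e) \<in> R \<and> (tgt e, w) \<in> R) \<or> ((u, tgt e) \<in> R \<and> (src e, w) \<in> R)"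
  proof (induction rule: rtrancl_induct)
    case (step v t)
    then consider "(v, t) \<in> edge_rel D src tgt" | "v = src e" "t = tgt e" | "v = tgt e" "t = src e"
      by (auto simp: edge_rel_insert)
    then show ?case
    proof cases
      case 1
      then have "(v, t) \<in> R" unfolding R_def by blast
      then show ?thesis using step.IH unfolding R_def by (meson rtrancl_trans)
    qed (use step.IH bridge sym in \<open>auto simp: R_def\<close>)
  qed (simp add: R_def)
next
  have "R \<subseteq> (edge_rel (insert e D) src tgt)\<^sup>*"
    unfolding R_def by (rule rtrancl_mono) (auto simp: edge_rel_insert)
  moreover have "(src e, tgt e) \<in> (edge_rel (insert e D) src tgt)\<^sup>*"
    and "(tgt e, src e) \<in> (edge_rel (insert e D) src tgt)\<^sup>*"
    by (auto simp: edge_rel_insert)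
  ultimately show "(u, w) \<in> R \<or> ((u, src e) \<in> R \<and> (tgt e, w) \<in> R) \<or> ((u, tgt e) \<in> R \<and> (src e, w) \<in> R)
    \<Longrightarrow> (u, w) \<in> (edge_rel (insert e D) src tgt)\<^sup>*"
    by (meson rtrancl_trans subsetD)
qed

lemma card_components_insert_bridge:
  assumes "finite V" and "src e \<in> V" and "tgt e \<in> V"
    and bridge: "(src e, tgt e) \<notin> (edge_rel D src tgt)\<^sup>*"
  shows "card (V // ((edge_rel (insert e D) src tgt)\<^sup>* \<inter> V \<times> V)) + 1
       = card (V // ((edge_rel D src tgt)\<^sup>* \<inter> V \<times> V))"
proof -
  let ?R = "(edge_rel D src tgt)\<^sup>*" and ?R' = "(edge_rel (insert e D) src tgt)\<^sup>*"
  let ?Q = "?R \<inter> V \<times> V" and ?Q' = "?R' \<inter> V \<times> V"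
  let ?merge = "\<lambda>C. ?Q' `` C" and ?Cy = "?Q `` {tgt e}"
  have eq: "equiv V ?Q" and eq': "equiv V ?Q'" by (rule equiv_rtrancl_edge_rel)+
  have "?R \<subseteq> ?R'" by (rule rtrancl_mono) (auto simp: edge_rel_insert)
  then have QQ': "?Q \<subseteq> ?Q'" by blast
  have merge_class: "?merge (?Q `` {u}) = ?Q' `` {u}" for u
    by (rule refines_equiv_class_eq2[OF QQ' eq eq'])
  \<comment> \<open>Adding the bridge merges exactly the classes of its two endpoints.\<close>
  have inj: "inj_on ?merge (V // ?Q - {?Cy})"
  proof (rule inj_onI)
    fix U W assume U: "U \<in> V // ?Q - {?Cy}" and W: "W \<in> V // ?Q - {?Cy}" and UW: "?merge U = ?merge W"
    obtain u w where u: "u \<in> V" "U = ?Q `` {u}" and w: "w \<in> V" "W = ?Q `` {w}"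
      using U W unfolding quotient_def by blast
    have "?Q' `` {u} = ?Q' `` {w}" using UW unfolding u(2) w(2) merge_class .
    then have "(u, w) \<in> ?Q'" by (rule eq_equiv_class[OF _ eq' w(1)])
    then consider "(u, w) \<in> ?R" | "(u, tgt e) \<in> ?R" | "(tgt e, w) \<in> ?R"
      using rtrancl_edge_rel_insert_bridge[OF bridge, of u w] by blast
    then show "U = W"
    proof cases
      case 1 then have "(u, w) \<in> ?Q" using u w by blast
      then show ?thesis unfolding u(2) w(2) by (rule equiv_class_eq[OF eq])
    next
      case 2 then have "(u, tgt e) \<in> ?Q" using u assms(3) by blast
      then have "U = ?Cy" unfolding u(2) by (rule equiv_class_eq[OF eq])
      then show ?thesis using U by simp
    next
      case 3 then have "(tgt e, w) \<in> ?Q" using w assms(3) by blast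
      then have "W = ?Cy" unfolding w(2) by (rule equiv_class_eq[OF eq, symmetric])
      then show ?thesis using W by simp
    qed
  qed
  have img: "?merge ` (V // ?Q - {?Cy}) = V // ?Q'"
  proof -
    have "(src e, tgt e) \<in> ?Q'" using assms(2,3) by (auto simp: edge_rel_insert)
    then have "?merge ?Cy = ?merge (?Q `` {src e})"
      unfolding merge_class by (rule equiv_class_eq[OF eq', symmetric])
    moreover have "?Q `` {src e} \<noteq> ?Cy"
      using eq_equiv_class[OF _ eq assms(3)] bridge by blast
    then have "?Q `` {src e} \<in> V // ?Q - {?Cy}" using quotientI[OF assms(2)] by blast
    ultimately have "?merge ` (V // ?Q - {?Cy}) = ?merge ` (V // ?Q)" by blast
    then show ?thesis using refines_equiv_image_eq[OF QQ' eq eq'] by simp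
  qed
  have Cy: "?Cy \<in> V // ?Q" using assms(3) by (rule quotientI)
  have fin: "finite (V // ?Q)" by (rule finite_quotient[OF assms(1)]) blast
  have "card (V // ?Q') = card (V // ?Q - {?Cy})" using card_image[OF inj] img by simp
  also have "\<dots> = card (V // ?Q) - 1" using Cy by (rule card_Diff_singleton)
  moreover have "card (V // ?Q) > 0" using Cy fin by (auto simp: card_gt_0_iff)
  ultimately show ?thesis by linarith
qed

lemma card_components_no_edges:
  "card (V // ((edge_rel {} src tgt)\<^sup>* \<inter> V \<times> V)) = card V"
proof -
  have "V // ((edge_rel {} src tgt)\<^sup>* \<inter> V \<times> V) = (\<lambda>v. {v}) ` V"
    by (auto simp: edge_rel_def quotient_def)
  then show ?thesis by (simp add: card_image)
qed

text \<open>Every function on the edges splits as the coboundary of a potential \<open>pot\<close> plus the image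
  under the section \<open>sec\<close> of its coordinates \<open>T f\<close> on the edge set \<open>K\<close>, which is
  the complement of a spanning forest.\<close>
locale coboundary_splitting =
  fixes D :: "'e set" and src tgt :: "'e \<Rightarrow> 'v" and K :: "'e set"
    and T sec :: "('e \<Rightarrow> int) \<Rightarrow> 'e \<Rightarrow> int" and pot :: "('e \<Rightarrow> int) \<Rightarrow> 'v \<Rightarrow> int"
  assumes K_subset: "K \<subseteq> D"
    and T_closed: "f \<in> supported_on D \<Longrightarrow> T f \<in> supported_on K"
    and T_additive: "additive_on (supported_on D) T"
    and sec_closed: "h \<in> supported_on K \<Longrightarrow> sec h \<in> supported_on D"
    and sec_zero: "sec 0 = 0"
    and T_sec: "h \<in> supported_on K \<Longrightarrow> T (sec h) = h"
    and pot_additive: "additive_on (supported_on D) pot"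
    and decomp: "f \<in> supported_on D \<Longrightarrow> f = coboundary D src tgt (pot f) + sec (T f)"
    and T_coboundary: "T (coboundary D src tgt g) = 0"
begin

lemma T_eq_0_iff:
  assumes "f \<in> supported_on D"
  shows "T f = 0 \<longleftrightarrow> (\<exists>g. f = coboundary D src tgt g)"
  using decomp[OF assms] sec_zero T_coboundary by force

lemma T_surj: "h \<in> supported_on K \<Longrightarrow> \<exists>f\<in>supported_on D. T f = h"
  using sec_closed T_sec by blast

lemma pot_coboundary_diff:
  assumes "(u, w) \<in> (edge_rel D src tgt)\<^sup>*"
  shows "pot (coboundary D src tgt g) u - pot (coboundary D src tgt g) w = g u - g w"
proof -
  have "coboundary D src tgt g = coboundary D src tgt (pot (coboundary D src tgt g))"
    using decomp[OF coboundary_in_supported_on, of src tgt g] T_coboundary sec_zero by simp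
  then have "coboundary D src tgt (g - pot (coboundary D src tgt g)) = 0"
    by (simp add: coboundary_diff)
  from coboundary_zero_const[OF this assms] show ?thesis by simp
qed

lemma pot_sec_eq:
  assumes "h \<in> supported_on K" and "(u, w) \<in> (edge_rel D src tgt)\<^sup>*"
  shows "pot (sec h) u = pot (sec h) w"
proof -
  have "coboundary D src tgt (pot (sec h)) = 0"
    using decomp[OF sec_closed[OF assms(1)]] T_sec[OF assms(1)] by (metis add_cancel_right_left)
  from coboundary_zero_const[OF this assms(2)] show ?thesis .
qed

end

lemma coboundary_splitting_no_edges:
  "coboundary_splitting {} src tgt {} (\<lambda>f. 0) (\<lambda>h. 0) (\<lambda>f. 0)"
  by unfold_locales (auto simp: supported_on_def coboundary_def additive_on_def)

text \<open>An edge closing a cycle becomes a new coordinate; its value is what remains of \<open>f e\<close>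
  after subtracting the coboundary of the potential of the other edges.\<close>
lemma coboundary_splitting_insert_cycle_edge:
  fixes D src tgt K T sec pot e
  defines "rest \<equiv> \<lambda>f. f e - (pot (f(e := 0)) (src e) - pot (f(e := 0)) (tgt e))"
  defines "T' \<equiv> \<lambda>f. (T (f(e := 0)))(e := rest f)"
    and "sec' \<equiv> \<lambda>h. (sec (h(e := 0)))(e := h e)"
    and "pot' \<equiv> \<lambda>f. pot (f(e := 0))"
  assumes "coboundary_splitting D src tgt K T sec pot" and e: "e \<notin> D"
    and cycle: "(src e, tgt e) \<in> (edge_rel D src tgt)\<^sup>*"
  shows "coboundary_splitting (insert e D) src tgt (insert e K) T' sec' pot'"
proof -
  interpret old: coboundary_splitting D src tgt K T sec pot by (rule assms(5))
  have eK: "e \<notin> K" using old.K_subset e by auto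
  have T_upd: "additive_on (supported_on (insert e D)) (\<lambda>f. T (f(e := 0)))"
    by (rule additive_on_fun_upd_zero[OF old.T_additive])
  have pot': "additive_on (supported_on (insert e D)) pot'"
    unfolding pot'_def by (rule additive_on_fun_upd_zero[OF old.pot_additive])
  have T'_upd: "(T' f)(e := 0) = T (f(e := 0))" if "f \<in> supported_on (insert e D)" for f
  proof -
    have "T (f(e := 0)) e = 0"
      using supported_onD[OF old.T_closed[OF fun_upd_zero_supported_on[OF that]] eK] .
    then show ?thesis unfolding T'_def by auto
  qed
  show ?thesis
  proof unfold_locales
    show "insert e K \<subseteq> insert e D" using old.K_subset by auto
  next
    fix f assume "f \<in> supported_on (insert e D)"
    then show "T' f \<in> supported_on (insert e K)"
      using old.T_closed[OF fun_upd_zero_supported_on] unfolding T'_def supported_on_def by auto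
  next
    show "additive_on (supported_on (insert e D)) T'" unfolding additive_on_def
    proof (intro ballI)
      fix f g assume "f \<in> supported_on (insert e D)" "g \<in> supported_on (insert e D)"
      then have "T ((f + g)(e := 0)) = T (f(e := 0)) + T (g(e := 0))" "rest (f + g) = rest f + rest g"
        using additive_onD[OF T_upd] additive_onD[OF pot'] unfolding rest_def pot'_def by auto
      then show "T' (f + g) = T' f + T' g" unfolding T'_def by (simp add: fun_eq_iff)
    qed
  next
    fix h assume "h \<in> supported_on (insert e K)"
    then show "sec' h \<in> supported_on (insert e D)"
      using old.sec_closed[OF fun_upd_zero_supported_on] unfolding sec'_def supported_on_def by auto
  next
    have "0(e := 0) = (0 :: _ \<Rightarrow> int)" by (rule ext) simp
    then have "sec' 0 = (sec 0)(e := 0 e)" unfolding sec'_def by simp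
    also have "\<dots> = 0" using old.sec_zero by (intro ext) simp
    finally show "sec' 0 = 0" .
  next
    fix h assume h: "h \<in> supported_on (insert e K)"
    then have h0: "h(e := 0) \<in> supported_on K" by (rule fun_upd_zero_supported_on)
    have upd: "(sec' h)(e := 0) = sec (h(e := 0))"
      using supported_onD[OF old.sec_closed[OF h0] e] unfolding sec'_def by (simp add: fun_eq_iff)
    have "rest (sec' h) = h e"
      unfolding rest_def upd using old.pot_sec_eq[OF h0 cycle] by (simp add: sec'_def)
    then have "T' (sec' h) = (h(e := 0))(e := h e)" unfolding T'_def upd old.T_sec[OF h0] by simp
    then show "T' (sec' h) = h" by simp
  next
    show "additive_on (supported_on (insert e D)) pot'" by (rule pot')
  next
    fix f assume f: "f \<in> supported_on (insert e D)"
    then have f0: "f(e := 0) \<in> supported_on D" by (rule fun_upd_zero_supported_on)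
    have sec'_T': "sec' (T' f) = (sec (T (f(e := 0))))(e := rest f)"
      unfolding sec'_def T'_upd[OF f] by (simp add: T'_def)
    show "f = coboundary (insert e D) src tgt (pot' f) + sec' (T' f)"
    proof
      fix d show "f d = (coboundary (insert e D) src tgt (pot' f) + sec' (T' f)) d"
      proof (cases "d = e")
        case True then show ?thesis by (simp add: sec'_T' rest_def pot'_def coboundary_def)
      next
        case False
        then show ?thesis using fun_cong[OF old.decomp[OF f0], of d] e
          by (simp add: sec'_T' pot'_def coboundary_def)
      qed
    qed
  next
    fix g
    have "rest (coboundary (insert e D) src tgt g) = coboundary (insert e D) src tgt g e
        - (pot (coboundary D src tgt g) (src e) - pot (coboundary D src tgt g) (tgt e))"
      unfolding rest_def coboundary_insert_fun_upd[OF e] ..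
    also have "\<dots> = 0" using old.pot_coboundary_diff[OF cycle, of g] by (simp add: coboundary_def)
    finally have "rest (coboundary (insert e D) src tgt g) = 0" .
    then show "T' (coboundary (insert e D) src tgt g) = 0"
      unfolding T'_def coboundary_insert_fun_upd[OF e] old.T_coboundary by (simp add: fun_eq_iff)
  qed
qed

text \<open>A bridge adds no coordinate: the potential is corrected by a constant on the component of
  \<open>src e\<close>, chosen so that the coboundary matches \<open>f\<close> on \<open>e\<close>.\<close>
lemma coboundary_splitting_insert_bridge:
  fixes D src tgt K T sec pot e
  defines "side \<equiv> \<lambda>v. if (src e, v) \<in> (edge_rel D src tgt)\<^sup>* then 1 else (0::int)"
  defines "pot' \<equiv> \<lambda>f. pot (f(e := 0)) + (\<lambda>v. (f e - (pot (f(e := 0)) (src e) - pot (f(e := 0)) (tgt e))) * side v)"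
  assumes "coboundary_splitting D src tgt K T sec pot" and e: "e \<notin> D"
    and bridge: "(src e, tgt e) \<notin> (edge_rel D src tgt)\<^sup>*"
  shows "coboundary_splitting (insert e D) src tgt K (\<lambda>f. T (f(e := 0))) sec pot'"
proof -
  interpret old: coboundary_splitting D src tgt K T sec pot by (rule assms(3))
  have side_edge: "side (src d) = side (tgt d)" if "d \<in> D" for d
  proof -
    have "(src d, tgt d) \<in> (edge_rel D src tgt)\<^sup>*" "(tgt d, src d) \<in> (edge_rel D src tgt)\<^sup>*"
      using that by (auto simp: edge_rel_def)
    then show ?thesis unfolding side_def by (meson rtrancl_trans)
  qed
  have side_e: "side (src e) = 1" "side (tgt e) = 0" using bridge by (simp_all add: side_def)
  have pot_upd: "additive_on (supported_on (insert e D)) (\<lambda>f. pot (f(e := 0)))"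
    by (rule additive_on_fun_upd_zero[OF old.pot_additive])
  show ?thesis
  proof unfold_locales
    show "K \<subseteq> insert e D" using old.K_subset by auto
  next
    fix f assume "f \<in> supported_on (insert e D)"
    then show "T (f(e := 0)) \<in> supported_on K" by (intro old.T_closed fun_upd_zero_supported_on)
  next
    show "additive_on (supported_on (insert e D)) (\<lambda>f. T (f(e := 0)))"
      by (rule additive_on_fun_upd_zero[OF old.T_additive])
  next
    fix h assume "h \<in> supported_on K"
    then show "sec h \<in> supported_on (insert e D)" using old.sec_closed supported_on_mono by blast
  next
    fix h assume h: "h \<in> supported_on K"
    have "(sec h)(e := 0) = sec h" using supported_onD[OF old.sec_closed[OF h] e] by auto
    then show "T ((sec h)(e := 0)) = h" using old.T_sec[OF h] by simp
  next
    show "additive_on (supported_on (insert e D)) pot'" unfolding additive_on_def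
    proof (intro ballI)
      fix f g assume "f \<in> supported_on (insert e D)" "g \<in> supported_on (insert e D)"
      then have "pot ((f + g)(e := 0)) = pot (f(e := 0)) + pot (g(e := 0))"
        using additive_onD[OF pot_upd] by blast
      then show "pot' (f + g) = pot' f + pot' g" unfolding pot'_def by (simp add: fun_eq_iff algebra_simps)
    qed
  next
    fix f assume f: "f \<in> supported_on (insert e D)"
    then have f0: "f(e := 0) \<in> supported_on D" by (rule fun_upd_zero_supported_on)
    have sec_T: "sec (T (f(e := 0))) \<in> supported_on D" by (rule old.sec_closed[OF old.T_closed[OF f0]])
    show "f = coboundary (insert e D) src tgt (pot' f) + sec (T (f(e := 0)))"
    proof
      fix d show "f d = (coboundary (insert e D) src tgt (pot' f) + sec (T (f(e := 0)))) d"
      proof (cases "d = e")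
        case True
        then show ?thesis using supported_onD[OF sec_T e] side_e by (simp add: pot'_def coboundary_def)
      next
        case False
        show ?thesis
        proof (cases "d \<in> D")
          case True
          then show ?thesis using fun_cong[OF old.decomp[OF f0], of d] side_edge[OF True] \<open>d \<noteq> e\<close>
            by (simp add: pot'_def coboundary_def algebra_simps)
        next
          case False
          then show ?thesis using supported_onD[OF f, of d] supported_onD[OF sec_T False] \<open>d \<noteq> e\<close>
            by (simp add: coboundary_def)
        qed
      qed
    qed
  next
    fix g
    show "T ((coboundary (insert e D) src tgt g)(e := 0)) = 0"
      unfolding coboundary_insert_fun_upd[OF e] by (rule old.T_coboundary)
  qed (rule old.sec_zero)
qed

text \<open>\<open>T\<close> identifies the cokernel of the coboundary map with \<open>\<int>\<^sup>K\<close>, so the cokernel is free of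
  rank \<open>|edges| - |vertices| + |components|\<close>.\<close>
theorem coboundary_splitting_exists:
  assumes "finite D" and "finite V" and "\<forall>d\<in>D. src d \<in> V \<and> tgt d \<in> V"
  shows "\<exists>K T sec pot. coboundary_splitting D src tgt K T sec pot \<and>
     card K + card V = card D + card (V // ((edge_rel D src tgt)\<^sup>* \<inter> V \<times> V))"
  using assms
proof (induction D rule: finite_induct)
  case empty
  have "card {} + card V = card {} + card (V // ((edge_rel {} src tgt)\<^sup>* \<inter> V \<times> V))"
    by (simp add: card_components_no_edges)
  with coboundary_splitting_no_edges show ?case by blast
next
  case (insert e D)
  then obtain K T sec pot where split: "coboundary_splitting D src tgt K T sec pot"
    and card: "card K + card V = card D + card (V // ((edge_rel D src tgt)\<^sup>* \<inter> V \<times> V))"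
    by auto
  have "finite K" "e \<notin> K"
    using coboundary_splitting.K_subset[OF split] insert.hyps finite_subset by auto
  show ?case
  proof (cases "(src e, tgt e) \<in> (edge_rel D src tgt)\<^sup>*")
    case True
    have "card (insert e K) + card V
        = card (insert e D) + card (V // ((edge_rel (insert e D) src tgt)\<^sup>* \<inter> V \<times> V))"
      using card \<open>finite K\<close> \<open>e \<notin> K\<close> insert.hyps by (simp add: rtrancl_edge_rel_insert_cycle[OF True])
    with coboundary_splitting_insert_cycle_edge[OF split insert.hyps(2) True] show ?thesis by blast
  next
    case False
    have "card K + card V
        = card (insert e D) + card (V // ((edge_rel (insert e D) src tgt)\<^sup>* \<inter> V \<times> V))"
      using card insert.hyps card_components_insert_bridge[OF insert.prems(1) _ _ False] insert.prems(2)
      by simp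
    with coboundary_splitting_insert_bridge[OF split insert.hyps(2) False] show ?thesis by blast
  qed
qed

section \<open>Homomorphisms to integer vectors and free abelian groups\<close>

lemma sum_fun_apply: "(\<Sum>i\<in>I. F i) t = (\<Sum>i\<in>I. F i t :: 'b :: comm_monoid_add)"
  by (induction I rule: infinite_finite_induct) simp_all

definition unit_vec :: "'k \<Rightarrow> 'k \<Rightarrow> int" where
  "unit_vec k = (\<lambda>t. if t = k then 1 else 0)"

lemma unit_vec_supported_on: "k \<in> K \<Longrightarrow> unit_vec k \<in> supported_on K"
  by (simp add: unit_vec_def supported_on_def)

lemma unit_vec_inject: "unit_vec k = unit_vec k' \<longleftrightarrow> k = k'"
  by (auto simp: unit_vec_def fun_eq_iff)

lemma sum_unit_vec_apply:
  "finite K \<Longrightarrow> (\<Sum>k\<in>K. (\<lambda>t. c k * unit_vec k t)) t = (if t \<in> K then c t else 0)"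
  by (simp add: sum_fun_apply unit_vec_def if_distrib cong: if_cong)

definition int_fun_hom :: "('a, 'b) monoid_scheme \<Rightarrow> ('a \<Rightarrow> 'k \<Rightarrow> int) \<Rightarrow> bool" where
  "int_fun_hom G \<phi> \<longleftrightarrow> (\<forall>x\<in>carrier G. \<forall>y\<in>carrier G. \<phi> (x \<otimes>\<^bsub>G\<^esub> y) = \<phi> x + \<phi> y)"

lemma int_fun_homD:
  "int_fun_hom G \<phi> \<Longrightarrow> x \<in> carrier G \<Longrightarrow> y \<in> carrier G \<Longrightarrow> \<phi> (x \<otimes>\<^bsub>G\<^esub> y) = \<phi> x + \<phi> y"
  by (simp add: int_fun_hom_def)

lemma int_fun_hom_comp: "h \<in> hom H G \<Longrightarrow> int_fun_hom G \<phi> \<Longrightarrow> int_fun_hom H (\<phi> \<circ> h)"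
  unfolding int_fun_hom_def hom_def by auto

context group
begin

lemma int_fun_hom_one: "int_fun_hom G \<phi> \<Longrightarrow> \<phi> \<one> = 0"
  using int_fun_homD[of G \<phi> \<one> \<one>] by simp

lemma int_fun_hom_inv:
  assumes "int_fun_hom G \<phi>" "x \<in> carrier G" shows "\<phi> (inv x) = - \<phi> x"
  using int_fun_homD[OF assms(1) inv_closed[OF assms(2)] assms(2)] int_fun_hom_one[OF assms(1)] assms(2)
  by (simp add: eq_neg_iff_add_eq_0)

lemma int_fun_hom_pow_nat:
  assumes "int_fun_hom G \<phi>" "x \<in> carrier G" shows "\<phi> (x [^] (k::nat)) = (\<lambda>t. int k * \<phi> x t)"
proof (induction k)
  case (Suc k)
  have "\<phi> (x [^] Suc k) = \<phi> (x [^] k) + \<phi> x" using int_fun_homD[OF assms(1)] assms(2) by simp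
  then show ?case using Suc by (simp add: fun_eq_iff algebra_simps)
qed (simp add: int_fun_hom_one[OF assms(1)] fun_eq_iff)

lemma int_fun_hom_pow:
  assumes "int_fun_hom G \<phi>" "x \<in> carrier G" shows "\<phi> (x [^] (k::int)) = (\<lambda>t. k * \<phi> x t)"
proof (cases k rule: int_cases)
  case (nonneg j)
  then show ?thesis using int_fun_hom_pow_nat[OF assms, of j] by (simp add: int_pow_int)
next
  case (neg j)
  then have "x [^] k = x [^] (- int (Suc j))" by simp
  also have "\<dots> = inv (x [^] (Suc j))" by (simp only: int_pow_neg[OF assms(2)] int_pow_int)
  finally have "x [^] k = inv (x [^] (Suc j))" .
  then show ?thesis
    using int_fun_hom_inv[OF assms(1)] int_fun_hom_pow_nat[OF assms, of "Suc j"] assms(2) neg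
    by (simp add: fun_eq_iff del: of_nat_Suc)
qed

lemma int_fun_hom_kernel_subgroup:
  assumes "int_fun_hom G \<phi>" shows "subgroup {x \<in> carrier G. \<phi> x = 0} G"
proof
  show "\<one> \<in> {x \<in> carrier G. \<phi> x = 0}" using int_fun_hom_one[OF assms] by simp
  fix x y assume "x \<in> {x \<in> carrier G. \<phi> x = 0}" "y \<in> {x \<in> carrier G. \<phi> x = 0}"
  then show "x \<otimes> y \<in> {x \<in> carrier G. \<phi> x = 0}" using int_fun_homD[OF assms, of x y] by simp
next
  fix x assume "x \<in> {x \<in> carrier G. \<phi> x = 0}"
  then show "inv x \<in> {x \<in> carrier G. \<phi> x = 0}" using int_fun_hom_inv[OF assms, of x] by simp
qed auto

lemma int_fun_hom_kills_derived:
  assumes "int_fun_hom G \<phi>" "x \<in> derived G (carrier G)" shows "\<phi> x = 0"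
proof -
  have "derived_set G (carrier G) \<subseteq> {x \<in> carrier G. \<phi> x = 0}"
  proof
    fix d assume "d \<in> derived_set G (carrier G)"
    then obtain h1 h2 where h: "h1 \<in> carrier G" "h2 \<in> carrier G" "d = h1 \<otimes> h2 \<otimes> inv h1 \<otimes> inv h2"
      by auto
    then have "\<phi> d = \<phi> h1 + \<phi> h2 + \<phi> (inv h1) + \<phi> (inv h2)" using int_fun_homD[OF assms(1)] by simp
    then show "d \<in> {x \<in> carrier G. \<phi> x = 0}" using h int_fun_hom_inv[OF assms(1)] by simp
  qed
  then have "derived G (carrier G) \<subseteq> {x \<in> carrier G. \<phi> x = 0}"
    unfolding derived_def by (rule generate_subgroup_incl[OF _ int_fun_hom_kernel_subgroup[OF assms(1)]])
  then show ?thesis using assms(2) by auto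
qed

lemma int_fun_hom_foldr:
  assumes "int_fun_hom G \<phi>" "f ` set l \<subseteq> carrier G"
  shows "\<phi> (foldr (\<otimes>) (map f l) \<one>) = sum_list (map (\<phi> \<circ> f) l)"
  using assms(2)
proof (induction l)
  case (Cons a l)
  have "foldr (\<otimes>) (map f l) \<one> \<in> carrier G" using Cons.prems by (induction l) auto
  then show ?case using Cons int_fun_homD[OF assms(1)] by simp
qed (simp add: int_fun_hom_one[OF assms(1)])

end

lemma (in comm_group) int_fun_hom_finprod:
  assumes "int_fun_hom G \<phi>" "f \<in> I \<rightarrow> carrier G" "finite I"
  shows "\<phi> (finprod G f I) = (\<Sum>i\<in>I. \<phi> (f i))"
  using assms(3,2)
proof (induction I rule: finite_induct)
  case (insert x F)
  then show ?case using int_fun_homD[OF assms(1)] by simp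
qed (simp add: int_fun_hom_one[OF assms(1)])

lemma hom_foldr:
  assumes "group G" "group H" "h \<in> hom G H" "f ` set l \<subseteq> carrier G"
  shows "h (foldr (\<otimes>\<^bsub>G\<^esub>) (map f l) \<one>\<^bsub>G\<^esub>) = foldr (\<otimes>\<^bsub>H\<^esub>) (map (h \<circ> f) l) \<one>\<^bsub>H\<^esub>"
  using assms(4)
proof (induction l)
  case (Cons x l)
  interpret group G by (rule assms(1))
  have "foldr (\<otimes>\<^bsub>G\<^esub>) (map f l) \<one>\<^bsub>G\<^esub> \<in> carrier G" using Cons.prems by (induction l) auto
  then show ?case using Cons assms(3) by (simp add: hom_mult)
qed (use assms in \<open>simp add: hom_one\<close>)

locale coordinates =
  fixes H :: "('a, 'b) monoid_scheme" and J :: "'k set" and b :: "'k \<Rightarrow> 'a"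
    and co :: "'a \<Rightarrow> 'k \<Rightarrow> int"
  assumes co_closed: "x \<in> carrier H \<Longrightarrow> co x \<in> supported_on J"
    and co_hom: "int_fun_hom H co"
    and co_basis: "j \<in> J \<Longrightarrow> co (b j) = unit_vec j"
    and co_eq_0: "x \<in> carrier H \<Longrightarrow> co x = 0 \<Longrightarrow> x = \<one>\<^bsub>H\<^esub>"
    and co_surj: "c \<in> supported_on J \<Longrightarrow> \<exists>x\<in>carrier H. co x = c"

lemma free_abelian_basis_coordinates:
  assumes "free_abelian_basis H J b"
  shows "\<exists>co. coordinates H J b co"
proof -
  have cg: "comm_group H" and fJ: "finite J" and bJ: "b \<in> J \<rightarrow> carrier H"
    and bij: "bij_betw (\<lambda>k. finprod H (\<lambda>j. b j [^]\<^bsub>H\<^esub> (k j :: int)) J) (J \<rightarrow>\<^sub>E UNIV) (carrier H)"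
    using assms unfolding free_abelian_basis_def by auto
  interpret comm_group H by (rule cg)
  define F where "F = (\<lambda>k. finprod H (\<lambda>j. b j [^]\<^bsub>H\<^esub> (k j :: int)) J)"
  have pow_closed: "(\<lambda>j. b j [^]\<^bsub>H\<^esub> (c j :: int)) \<in> J \<rightarrow> carrier H" for c using bJ by auto
  have F_closed: "F c \<in> carrier H" for c unfolding F_def using pow_closed by simp
  have F_restrict: "F c = F (restrict c J)" for c unfolding F_def
    by (rule finprod_cong') (use pow_closed in auto)
  have F_add: "F (c + d) = F c \<otimes>\<^bsub>H\<^esub> F d" for c d
  proof -
    have "F (c + d) = finprod H (\<lambda>j. b j [^]\<^bsub>H\<^esub> c j \<otimes>\<^bsub>H\<^esub> b j [^]\<^bsub>H\<^esub> d j) J" unfolding F_def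
      by (rule finprod_cong') (use bJ in \<open>auto simp: int_pow_mult[OF funcset_mem[OF bJ]]\<close>)
    then show ?thesis unfolding F_def using pow_closed by simp
  qed
  define co where "co = (\<lambda>x j. if j \<in> J then inv_into (J \<rightarrow>\<^sub>E UNIV) F x j else 0)"
  have co_closed: "co x \<in> supported_on J" for x unfolding co_def supported_on_def by auto
  have F_co: "F (co x) = x" if "x \<in> carrier H" for x
  proof -
    have x: "x \<in> F ` (J \<rightarrow>\<^sub>E UNIV)" using bij that unfolding bij_betw_def F_def by auto
    have "restrict (co x) J = inv_into (J \<rightarrow>\<^sub>E UNIV) F x"
      using inv_into_into[OF x] unfolding co_def by (auto simp: PiE_def extensional_def)
    then have "F (co x) = F (inv_into (J \<rightarrow>\<^sub>E UNIV) F x)" using F_restrict[of "co x"] by simp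
    then show ?thesis using f_inv_into_f[OF x] by simp
  qed
  have F_inj: "c = d" if "c \<in> supported_on J" "d \<in> supported_on J" "F c = F d" for c d
  proof (rule supported_on_eqI[OF that(1,2)])
    fix j assume "j \<in> J"
    have "restrict c J = restrict d J"
      using bij_betw_imp_inj_on[OF bij] F_restrict[of c] F_restrict[of d] that(3)
      unfolding F_def by (auto elim: inj_onD)
    then show "c j = d j" using \<open>j \<in> J\<close> by (metis restrict_apply')
  qed
  have "coordinates H J b co"
  proof
    show "int_fun_hom H co" unfolding int_fun_hom_def
    proof (intro ballI)
      fix x y assume "x \<in> carrier H" "y \<in> carrier H"
      then have "F (co x + co y) = F (co (x \<otimes>\<^bsub>H\<^esub> y))" using F_add F_co by simp
      then show "co (x \<otimes>\<^bsub>H\<^esub> y) = co x + co y"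
        by (intro F_inj[symmetric] supported_on_add co_closed)
    qed
  next
    fix j assume j: "j \<in> J"
    have "F (unit_vec j) = finprod H (\<lambda>k. if k = j then b k else \<one>\<^bsub>H\<^esub>) J" unfolding F_def unit_vec_def
      by (rule finprod_cong') (use funcset_mem[OF bJ] in auto)
    also have "\<dots> = b j" by (rule finprod_singleton_swap[OF j fJ bJ])
    finally show "co (b j) = unit_vec j"
      using F_inj[OF co_closed unit_vec_supported_on[OF j]] F_co[OF funcset_mem[OF bJ j]] by simp
  next
    fix x assume "x \<in> carrier H" "co x = 0"
    moreover have "F 0 = \<one>\<^bsub>H\<^esub>" unfolding F_def by (simp add: finprod_one_eqI)
    ultimately show "x = \<one>\<^bsub>H\<^esub>" using F_co[of x] by simp
  next
    fix c assume c: "c \<in> supported_on J"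
    have "co (F c) = c" by (rule F_inj[OF co_closed c F_co[OF F_closed]])
    then show "\<exists>x\<in>carrier H. co x = c" using F_closed by blast
  qed (rule co_closed)
  then show ?thesis by blast
qed

lemma int_fun_hom_factor:
  assumes "group A" "group B" and hom: "\<pi> \<in> hom A B" and surj: "\<pi> ` carrier A = carrier B"
    and \<phi>: "int_fun_hom A \<phi>" and kernel: "\<And>x. x \<in> carrier A \<Longrightarrow> \<pi> x = \<one>\<^bsub>B\<^esub> \<Longrightarrow> \<phi> x = 0"
  defines "\<Psi> \<equiv> \<lambda>y. \<phi> (SOME x. x \<in> carrier A \<and> \<pi> x = y)"
  shows "int_fun_hom B \<Psi>" and "\<And>x. x \<in> carrier A \<Longrightarrow> \<Psi> (\<pi> x) = \<phi> x"
proof -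
  interpret A: group A by (rule assms(1))
  interpret group_hom A B \<pi> using assms(1,2) hom by (simp add: group_hom_def group_hom_axioms_def)
  show factor: "\<Psi> (\<pi> x) = \<phi> x" if x: "x \<in> carrier A" for x
  proof -
    define x' where "x' = (SOME x'. x' \<in> carrier A \<and> \<pi> x' = \<pi> x)"
    have "\<exists>x'. x' \<in> carrier A \<and> \<pi> x' = \<pi> x" using x by blast
    then have "x' \<in> carrier A \<and> \<pi> x' = \<pi> x" unfolding x'_def by (rule someI_ex)
    then have x': "x' \<in> carrier A" "\<pi> x' = \<pi> x" by auto
    have "\<pi> (x' \<otimes>\<^bsub>A\<^esub> inv\<^bsub>A\<^esub> x) = \<pi> x \<otimes>\<^bsub>B\<^esub> inv\<^bsub>B\<^esub> (\<pi> x)"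
      using x x' by simp
    then have "\<phi> (x' \<otimes>\<^bsub>A\<^esub> inv\<^bsub>A\<^esub> x) = 0" by (intro kernel) (use x x' in simp_all)
    moreover have "\<phi> (x' \<otimes>\<^bsub>A\<^esub> inv\<^bsub>A\<^esub> x) = \<phi> x' + - \<phi> x"
      using int_fun_homD[OF \<phi> x'(1) A.inv_closed[OF x]] A.int_fun_hom_inv[OF \<phi> x] by simp
    ultimately have "\<phi> x' = \<phi> x" by (metis eq_neg_iff_add_eq_0 minus_minus)
    then show ?thesis unfolding \<Psi>_def x'_def[symmetric] .
  qed
  show "int_fun_hom B \<Psi>" unfolding int_fun_hom_def
  proof (intro ballI)
    fix y1 y2 assume "y1 \<in> carrier B" "y2 \<in> carrier B"
    then obtain x1 x2 where x: "x1 \<in> carrier A" "y1 = \<pi> x1" "x2 \<in> carrier A" "y2 = \<pi> x2"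
      using surj by blast
    have "\<Psi> (y1 \<otimes>\<^bsub>B\<^esub> y2) = \<Psi> (\<pi> (x1 \<otimes>\<^bsub>A\<^esub> x2))" using x by simp
    also have "\<dots> = \<phi> (x1 \<otimes>\<^bsub>A\<^esub> x2)" using x by (intro factor) simp
    also have "\<dots> = \<Psi> y1 + \<Psi> y2" using x factor int_fun_homD[OF \<phi>] by simp
    finally show "\<Psi> (y1 \<otimes>\<^bsub>B\<^esub> y2) = \<Psi> y1 + \<Psi> y2" .
  qed
qed

lemma free_abelian_basis_of_coordinates:
  assumes "comm_group Q" "finite J" "b \<in> J \<rightarrow> carrier Q"
    and \<Psi>: "int_fun_hom Q \<Psi>" and closed: "\<And>x. x \<in> carrier Q \<Longrightarrow> \<Psi> x \<in> supported_on J"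
    and basis: "\<And>j. j \<in> J \<Longrightarrow> \<Psi> (b j) = unit_vec j"
    and kernel: "\<And>x. x \<in> carrier Q \<Longrightarrow> \<Psi> x = 0 \<Longrightarrow> x = \<one>\<^bsub>Q\<^esub>"
  shows "free_abelian_basis Q J b"
proof -
  interpret comm_group Q by (rule assms(1))
  define F where "F = (\<lambda>c. finprod Q (\<lambda>j. b j [^]\<^bsub>Q\<^esub> (c j :: int)) J)"
  have pow_closed: "(\<lambda>j. b j [^]\<^bsub>Q\<^esub> (c j :: int)) \<in> J \<rightarrow> carrier Q" for c using assms(3) by auto
  have F_closed: "F c \<in> carrier Q" for c unfolding F_def using pow_closed by simp
  have \<Psi>_F: "\<Psi> (F c) = (\<lambda>t. if t \<in> J then c t else 0)" for c
  proof -
    have "\<Psi> (F c) = (\<Sum>j\<in>J. \<Psi> (b j [^]\<^bsub>Q\<^esub> c j))"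
      unfolding F_def by (rule int_fun_hom_finprod[OF \<Psi> pow_closed assms(2)])
    also have "\<dots> = (\<Sum>j\<in>J. (\<lambda>t. c j * unit_vec j t))"
      by (intro sum.cong refl) (simp add: int_fun_hom_pow[OF \<Psi> funcset_mem[OF assms(3)]] basis)
    finally show ?thesis using sum_unit_vec_apply[OF assms(2)] by (simp add: fun_eq_iff)
  qed
  have \<Psi>_inj: "x = y" if "x \<in> carrier Q" "y \<in> carrier Q" "\<Psi> x = \<Psi> y" for x y
  proof -
    have "\<Psi> (x \<otimes>\<^bsub>Q\<^esub> inv\<^bsub>Q\<^esub> y) = 0" using int_fun_homD[OF \<Psi>] int_fun_hom_inv[OF \<Psi>] that by simp
    then have "x \<otimes>\<^bsub>Q\<^esub> inv\<^bsub>Q\<^esub> y = \<one>\<^bsub>Q\<^esub>" using kernel that by simp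
    then have "(x \<otimes>\<^bsub>Q\<^esub> inv\<^bsub>Q\<^esub> y) \<otimes>\<^bsub>Q\<^esub> y = y" using that by simp
    then show ?thesis using that by (simp add: m_assoc)
  qed
  have "bij_betw F (J \<rightarrow>\<^sub>E UNIV) (carrier Q)"
  proof (rule bij_betw_imageI)
    show "inj_on F (J \<rightarrow>\<^sub>E UNIV)"
    proof (rule inj_onI)
      fix c d assume cd: "c \<in> J \<rightarrow>\<^sub>E UNIV" "d \<in> J \<rightarrow>\<^sub>E UNIV" "F c = F d"
      show "c = d"
      proof (rule PiE_ext[OF cd(1,2)])
        fix j assume "j \<in> J"
        then show "c j = d j" using fun_cong[OF \<Psi>_F[of c], of j] fun_cong[OF \<Psi>_F[of d], of j] cd(3) by simp
      qed
    qed
    show "F ` (J \<rightarrow>\<^sub>E UNIV) = carrier Q"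
    proof (intro equalityI subsetI)
      fix x assume x: "x \<in> carrier Q"
      have "\<Psi> (F (restrict (\<Psi> x) J)) = \<Psi> x"
        unfolding \<Psi>_F using closed[OF x] by (auto simp: supported_on_def)
      then have "F (restrict (\<Psi> x) J) = x" by (rule \<Psi>_inj[OF F_closed x])
      moreover have "restrict (\<Psi> x) J \<in> J \<rightarrow>\<^sub>E UNIV" by simp
      ultimately show "x \<in> F ` (J \<rightarrow>\<^sub>E UNIV)" by (metis image_eqI)
    qed (use F_closed in auto)
  qed
  then show ?thesis unfolding free_abelian_basis_def F_def using assms(1-3) by auto
qed

lemma free_abelian_quotient_by_kernel:
  assumes "comm_group H" "finite K" and \<Phi>: "int_fun_hom H \<Phi>"
    and closed: "\<And>x. x \<in> carrier H \<Longrightarrow> \<Phi> x \<in> supported_on K"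
    and surj: "\<And>k. k \<in> K \<Longrightarrow> \<exists>x\<in>carrier H. \<Phi> x = unit_vec k"
  shows "\<exists>B. free_abelian_basis (H Mod {x \<in> carrier H. \<Phi> x = 0}) B id \<and> card B = card K"
proof -
  interpret comm_group H by (rule assms(1))
  define N where "N = {x \<in> carrier H. \<Phi> x = 0}"
  have N: "subgroup N H" unfolding N_def by (rule int_fun_hom_kernel_subgroup[OF \<Phi>])
  then have "N \<lhd> H" by (simp add: normal_iff_subgroup)
  define Q where "Q = H Mod N"
  have Q: "comm_group Q" unfolding Q_def by (rule abelian_FactGroup[OF N])
  have hom: "(\<lambda>x. N #>\<^bsub>H\<^esub> x) \<in> hom H Q" unfolding Q_def by (rule normal.r_coset_hom_Mod[OF \<open>N \<lhd> H\<close>])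
  have carrier_Q: "carrier Q = (\<lambda>x. N #>\<^bsub>H\<^esub> x) ` carrier H" unfolding Q_def by (rule carrier_FactGroup)
  have one_Q: "\<one>\<^bsub>Q\<^esub> = N" unfolding Q_def by simp
  define \<Psi> where "\<Psi> = (\<lambda>y. \<Phi> (SOME x. x \<in> carrier H \<and> N #>\<^bsub>H\<^esub> x = y))"
  have kernel: "\<Phi> x = 0" if "x \<in> carrier H" "N #>\<^bsub>H\<^esub> x = \<one>\<^bsub>Q\<^esub>" for x
    using coset_join1[OF _ that(1) N] that N_def one_Q by auto
  have \<Psi>: "int_fun_hom Q \<Psi>" and \<Psi>_coset: "\<And>x. x \<in> carrier H \<Longrightarrow> \<Psi> (N #>\<^bsub>H\<^esub> x) = \<Phi> x"
    using int_fun_hom_factor[OF is_group comm_group.axioms(2)[OF Q] hom carrier_Q[symmetric] \<Phi> kernel]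
    unfolding \<Psi>_def by blast+
  have "\<exists>x. \<forall>k\<in>K. x k \<in> carrier H \<and> \<Phi> (x k) = unit_vec k" using surj by (intro bchoice) blast
  then obtain x where x: "\<And>k. k \<in> K \<Longrightarrow> x k \<in> carrier H \<and> \<Phi> (x k) = unit_vec k" by blast
  define b where "b k = N #>\<^bsub>H\<^esub> x k" for k
  have \<Psi>_b: "\<Psi> (b k) = unit_vec k" if "k \<in> K" for k using x[OF that] \<Psi>_coset b_def by simp
  have b_inj: "inj_on b K" by (rule inj_onI) (metis \<Psi>_b unit_vec_inject)
  \<comment> \<open>Re-index the coordinates by the basis elements themselves.\<close>
  define \<Psi>' where "\<Psi>' y \<beta> = (if \<beta> \<in> b ` K then \<Psi> y (inv_into K b \<beta>) else 0)" for y \<beta>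
  have "free_abelian_basis Q (b ` K) id"
  proof (rule free_abelian_basis_of_coordinates[OF Q])
    show "int_fun_hom Q \<Psi>'" using int_fun_homD[OF \<Psi>] unfolding int_fun_hom_def \<Psi>'_def by auto
    fix y assume "y \<in> carrier Q"
    then show "\<Psi>' y \<in> supported_on (b ` K)" by (simp add: \<Psi>'_def supported_on_def)
    show "\<Psi>' y = 0 \<Longrightarrow> y = \<one>\<^bsub>Q\<^esub>"
    proof -
      assume "\<Psi>' y = 0"
      obtain z where z: "z \<in> carrier H" "y = N #>\<^bsub>H\<^esub> z" using \<open>y \<in> carrier Q\<close> carrier_Q by auto
      have "\<Phi> z k = 0" if "k \<in> K" for k
        using fun_cong[OF \<open>\<Psi>' y = 0\<close>, of "b k"] that b_inj \<Psi>_coset[OF z(1)] z(2)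
        by (simp add: \<Psi>'_def)
      then have "\<Phi> z = 0"
        by (intro supported_on_eqI[OF closed[OF z(1)]]) (auto simp: supported_on_def)
      then show "y = \<one>\<^bsub>Q\<^esub>" using coset_join2[OF z(1) N] z N_def one_Q by simp
    qed
  next
    fix \<beta> assume "\<beta> \<in> b ` K"
    then show "\<Psi>' (id \<beta>) = unit_vec \<beta>"
      using \<Psi>_b b_inj by (auto simp: \<Psi>'_def unit_vec_def fun_eq_iff inj_on_eq_iff)
  qed (use assms(2) b_def carrier_Q x in auto)
  then show ?thesis using card_image[OF b_inj] unfolding Q_def N_def by blast
qed

lemma normal_closure_normal:
  assumes "group G" and Y: "Y \<subseteq> carrier G"
  shows "normal_closure G Y \<lhd> G" and "Y \<subseteq> normal_closure G Y"
proof -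
  interpret group G by (rule assms(1))
  let ?C = "{g \<otimes>\<^bsub>G\<^esub> y \<otimes>\<^bsub>G\<^esub> inv\<^bsub>G\<^esub> g | g y. g \<in> carrier G \<and> y \<in> Y}"
  show "normal_closure G Y \<lhd> G" unfolding normal_closure_def
  proof (rule normal_generateI)
    show "?C \<subseteq> carrier G" using Y by auto
    fix h g assume "h \<in> ?C" and g: "g \<in> carrier G"
    then obtain g' y where "g' \<in> carrier G" "y \<in> Y" "h = g' \<otimes>\<^bsub>G\<^esub> y \<otimes>\<^bsub>G\<^esub> inv\<^bsub>G\<^esub> g'" by auto
    moreover from this have "g \<otimes>\<^bsub>G\<^esub> h \<otimes>\<^bsub>G\<^esub> inv\<^bsub>G\<^esub> g = (g \<otimes>\<^bsub>G\<^esub> g') \<otimes>\<^bsub>G\<^esub> y \<otimes>\<^bsub>G\<^esub> inv\<^bsub>G\<^esub> (g \<otimes>\<^bsub>G\<^esub> g')"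
      using g Y by (simp add: subset_iff m_assoc inv_mult_group)
    ultimately show "g \<otimes>\<^bsub>G\<^esub> h \<otimes>\<^bsub>G\<^esub> inv\<^bsub>G\<^esub> g \<in> ?C" using g by blast
  qed
  have "y \<in> ?C" if "y \<in> Y" for y using that Y by force
  then show "Y \<subseteq> normal_closure G Y" unfolding normal_closure_def by (auto intro: generate.incl)
qed

lemma hom_kills_derived:
  assumes "group G" "comm_group H" "\<tau> \<in> hom G H" and "d \<in> derived G (carrier G)"
  shows "\<tau> d = \<one>\<^bsub>H\<^esub>"
proof -
  interpret comm_group H by (rule assms(2))
  interpret group_hom G H \<tau>
    using assms(1,3) is_group by (simp add: group_hom_def group_hom_axioms_def)
  have "\<tau> d \<in> derived H (\<tau> ` carrier G)" using derived_img[of "carrier G"] assms(4) by simp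
  also have "\<dots> = {\<one>\<^bsub>H\<^esub>}" by (rule derived_eq_singleton) auto
  finally show ?thesis by simp
qed

lemma (in group) generate_central_normal:
  assumes "c \<in> carrier G" and "\<And>g. g \<in> carrier G \<Longrightarrow> c \<otimes> g = g \<otimes> c"
  shows "generate G {c} \<lhd> G"
proof (rule normal_generateI)
  fix h g assume "h \<in> {c}" and g: "g \<in> carrier G"
  then have "g \<otimes> h \<otimes> inv g = c \<otimes> g \<otimes> inv g" using assms(2) by simp
  also have "\<dots> = c" using g assms(1) by (simp add: m_assoc)
  finally show "g \<otimes> h \<otimes> inv g \<in> {c}" by simp
qed (use assms(1) in simp)

lemma sum_fun_if_apply:
  assumes "finite I"
  shows "(\<Sum>i\<in>I. (\<lambda>t. if f t = i then c i t else (0::int))) p = (if f p \<in> I then c (f p) p else 0)"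
  using assms by (simp add: sum_fun_apply)

section \<open>The groups \<open>G_S\<close>, \<open>A\<close>, \<open>Abar\<close> and the map \<open>\<rho>\<close>\<close>

definition Lambda_src :: "nat \<times> nat \<Rightarrow> nat + nat" where
  "Lambda_src p = Inl (fst p)"

definition Lambda_tgt :: "nat \<times> nat \<Rightarrow> nat + nat" where
  "Lambda_tgt p = Inr (snd p)"

lemma Lambda_edges_eq: "Lambda_edges m S = edge_rel (Sigma {1..m} S) Lambda_src Lambda_tgt"
  unfolding Lambda_edges_def edge_rel_def Lambda_src_def Lambda_tgt_def by auto

locale setting = coordinates "abelianization (Aprod G a n m S)" "Sigma {1..m} S"
    "\<lambda>ij. derived (Aprod G a n m S) (carrier (Aprod G a n m S)) #>\<^bsub>Aprod G a n m S\<^esub> aA G a n m S ij"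
    coA
  for G :: "('g, 'x) monoid_scheme" and a :: "nat \<Rightarrow> 'g" and n m :: nat and S :: "nat \<Rightarrow> nat set"
    and coA +
  assumes grp: "group G"
    and gens: "a \<in> {1..n} \<rightarrow> carrier G"
    and generates: "generate G (a ` {1..n}) = carrier G"
    and central: "\<forall>g\<in>carrier G. prod_gens G a n \<otimes>\<^bsub>G\<^esub> g = g \<otimes>\<^bsub>G\<^esub> prod_gens G a n"
    and S_sub: "\<forall>i\<in>{1..m}. S i \<subseteq> {1..n}"
begin

abbreviation "G_S i \<equiv> GS G a n (S i)"
abbreviation "N_S i \<equiv> kerS G a n (S i)"
abbreviation "z_S i \<equiv> zS G a n (S i)"
abbreviation "Z_S i \<equiv> generate (G_S i) {z_S i}"
abbreviation "A \<equiv> Aprod G a n m S"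
abbreviation "A_bar \<equiv> Abar G a n m S"
abbreviation "z \<equiv> prod_gens G a n"
abbreviation "Edges \<equiv> Sigma {1..m} S"

lemma a_closed: "j \<in> {1..n} \<Longrightarrow> a j \<in> carrier G" using gens by auto

lemma z_eq_foldr: "z = foldr (\<otimes>\<^bsub>G\<^esub>) (map a [1..<Suc n]) \<one>\<^bsub>G\<^esub>" by (simp add: prod_gens_def)

lemma z_closed: "z \<in> carrier G"
proof -
  interpret group G by (rule grp)
  have fc: "foldr (\<otimes>\<^bsub>G\<^esub>) (map a l) \<one>\<^bsub>G\<^esub> \<in> carrier G" if "\<forall>j\<in>set l. a j \<in> carrier G" for l
    using that by (induction l) auto
  have "\<forall>j\<in>set [1..<Suc n]. a j \<in> carrier G" using a_closed by auto
  then show ?thesis unfolding z_eq_foldr by (rule fc)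
qed

lemma N_S_normal: "N_S i \<lhd> G" and gens_outside_S_in_N_S: "a ` ({1..n} - S i) \<subseteq> N_S i"
proof -
  have "a ` ({1..n} - S i) \<subseteq> carrier G" using a_closed by auto
  then show "N_S i \<lhd> G" "a ` ({1..n} - S i) \<subseteq> N_S i"
    unfolding kerS_def using normal_closure_normal[OF grp] by auto
qed

lemma G_S_group: "group (G_S i)"
  unfolding GS_def using normal.factorgroup_is_group[OF N_S_normal] .

lemma coset_hom_N_S: "(\<lambda>g. N_S i #>\<^bsub>G\<^esub> g) \<in> hom G (G_S i)"
  unfolding GS_def using normal.r_coset_hom_Mod[OF N_S_normal] .

lemma G_S_carrier: "carrier (G_S i) = (\<lambda>g. N_S i #>\<^bsub>G\<^esub> g) ` carrier G"
  unfolding GS_def by (rule carrier_FactGroup)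

lemma G_S_one: "\<one>\<^bsub>G_S i\<^esub> = N_S i" unfolding GS_def by simp

lemma aS_eq_coset: "aS G a n (S i) j = N_S i #>\<^bsub>G\<^esub> a j" by (simp add: aS_def)

lemma aS_outside_S: assumes "j \<in> {1..n}" "j \<notin> S i" shows "aS G a n (S i) j = \<one>\<^bsub>G_S i\<^esub>"
proof -
  interpret group G by (rule grp)
  have "a j \<in> N_S i" using gens_outside_S_in_N_S[of i] assms by blast
  then show ?thesis unfolding aS_eq_coset G_S_one
    using coset_join2[OF a_closed[OF assms(1)] normal.axioms(1)[OF N_S_normal]] by simp
qed

lemma aS_closed: "j \<in> {1..n} \<Longrightarrow> aS G a n (S i) j \<in> carrier (G_S i)"
  unfolding aS_eq_coset G_S_carrier using a_closed by auto

lemma z_S_eq_coset: "z_S i = N_S i #>\<^bsub>G\<^esub> z"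
proof -
  have s: "a ` set [1..<Suc n] \<subseteq> carrier G" using a_closed by auto
  have "z_S i = foldr (\<otimes>\<^bsub>G_S i\<^esub>) (map (aS G a n (S i)) [1..<Suc n]) \<one>\<^bsub>G_S i\<^esub>"
    by (simp add: zS_def prod_gens_def)
  also have "map (aS G a n (S i)) [1..<Suc n] = map ((\<lambda>g. N_S i #>\<^bsub>G\<^esub> g) \<circ> a) [1..<Suc n]"
    by (simp add: aS_eq_coset comp_def)
  also have "foldr (\<otimes>\<^bsub>G_S i\<^esub>) (map ((\<lambda>g. N_S i #>\<^bsub>G\<^esub> g) \<circ> a) [1..<Suc n]) \<one>\<^bsub>G_S i\<^esub> = N_S i #>\<^bsub>G\<^esub> z"
    unfolding z_eq_foldr by (rule hom_foldr[OF grp G_S_group coset_hom_N_S s, symmetric])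
  finally show ?thesis .
qed

lemma z_S_closed: "z_S i \<in> carrier (G_S i)" unfolding z_S_eq_coset G_S_carrier using z_closed by auto

lemma z_S_central: assumes "y \<in> carrier (G_S i)"
  shows "z_S i \<otimes>\<^bsub>G_S i\<^esub> y = y \<otimes>\<^bsub>G_S i\<^esub> z_S i"
proof -
  obtain x where x: "x \<in> carrier G" "y = N_S i #>\<^bsub>G\<^esub> x" using assms G_S_carrier by auto
  have "z_S i \<otimes>\<^bsub>G_S i\<^esub> y = N_S i #>\<^bsub>G\<^esub> (z \<otimes>\<^bsub>G\<^esub> x)"
    unfolding z_S_eq_coset x(2) using hom_mult[OF coset_hom_N_S z_closed x(1)] by simp
  also have "\<dots> = N_S i #>\<^bsub>G\<^esub> (x \<otimes>\<^bsub>G\<^esub> z)" using central x(1) by simp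
  also have "\<dots> = y \<otimes>\<^bsub>G_S i\<^esub> z_S i"
    unfolding z_S_eq_coset x(2) using hom_mult[OF coset_hom_N_S x(1) z_closed] by simp
  finally show ?thesis .
qed

lemma Z_S_normal: "Z_S i \<lhd> G_S i"
  using group.generate_central_normal[OF G_S_group z_S_closed z_S_central] .

lemma Gbar_S_group: "group (GbarS G a n (S i))"
  unfolding GbarS_def using normal.factorgroup_is_group[OF Z_S_normal] .

lemma A_group: "group A"
  unfolding Aprod_def by (rule product_group) (rule G_S_group)

lemma A_bar_group: "group A_bar"
  unfolding Abar_def by (rule product_group) (rule Gbar_S_group)


definition embed :: "nat \<Rightarrow> 'g set \<Rightarrow> nat \<Rightarrow> 'g set" where
  "embed i g = (\<lambda>i'\<in>{1..m}. if i' = i then g else \<one>\<^bsub>G_S i'\<^esub>)"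

definition proj_bar :: "(nat \<Rightarrow> 'g set) \<Rightarrow> nat \<Rightarrow> 'g set set" where
  "proj_bar x = (\<lambda>i\<in>{1..m}. Z_S i #>\<^bsub>G_S i\<^esub> x i)"

definition rho :: "'g \<Rightarrow> nat \<Rightarrow> 'g set" where
  "rho g = (\<lambda>i\<in>{1..m}. N_S i #>\<^bsub>G\<^esub> g)"

lemma A_carrier: "carrier A = (\<Pi>\<^sub>E i\<in>{1..m}. carrier (G_S i))"
  by (simp add: Aprod_def)
lemma A_mult: "x \<otimes>\<^bsub>A\<^esub> y = (\<lambda>i\<in>{1..m}. x i \<otimes>\<^bsub>G_S i\<^esub> y i)"
  by (simp add: Aprod_def)
lemma A_one: "\<one>\<^bsub>A\<^esub> = (\<lambda>i\<in>{1..m}. \<one>\<^bsub>G_S i\<^esub>)"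
  by (simp add: Aprod_def)
lemma A_bar_carrier: "carrier A_bar = (\<Pi>\<^sub>E i\<in>{1..m}. carrier (GbarS G a n (S i)))"
  by (simp add: Abar_def)
lemma A_bar_mult: "x \<otimes>\<^bsub>A_bar\<^esub> y = (\<lambda>i\<in>{1..m}. x i \<otimes>\<^bsub>GbarS G a n (S i)\<^esub> y i)"
  by (simp add: Abar_def)
lemma A_bar_one: "\<one>\<^bsub>A_bar\<^esub> = (\<lambda>i\<in>{1..m}. \<one>\<^bsub>GbarS G a n (S i)\<^esub>)"
  by (simp add: Abar_def)

lemma Gbar_S_carrier: "carrier (GbarS G a n (S i)) = (\<lambda>g. Z_S i #>\<^bsub>G_S i\<^esub> g) ` carrier (G_S i)"
  unfolding GbarS_def by (rule carrier_FactGroup)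

lemma Gbar_S_one: "\<one>\<^bsub>GbarS G a n (S i)\<^esub> = Z_S i" unfolding GbarS_def by simp

lemma coset_hom_Z_S: "(\<lambda>g. Z_S i #>\<^bsub>G_S i\<^esub> g) \<in> hom (G_S i) (GbarS G a n (S i))"
  unfolding GbarS_def using normal.r_coset_hom_Mod[OF Z_S_normal] .

lemma embed_closed: assumes "g \<in> carrier (G_S i)" shows "embed i g \<in> carrier A"
  unfolding A_carrier embed_def using assms group.is_monoid[OF G_S_group] by auto

lemma embed_hom: "embed i \<in> hom (G_S i) A"
proof (rule homI)
  fix g assume "g \<in> carrier (G_S i)" then show "embed i g \<in> carrier A" by (rule embed_closed)
next
  fix g h assume g: "g \<in> carrier (G_S i)" and h: "h \<in> carrier (G_S i)"
  show "embed i (g \<otimes>\<^bsub>G_S i\<^esub> h) = embed i g \<otimes>\<^bsub>A\<^esub> embed i h"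
    unfolding A_mult embed_def using group.is_monoid[OF G_S_group]
    by (intro restrict_ext) auto
qed

lemma embed_one: "embed i \<one>\<^bsub>G_S i\<^esub> = \<one>\<^bsub>A\<^esub>"
  unfolding embed_def A_one by (intro restrict_ext) auto

lemma aA_eq_embed: "aA G a n m S (i, j) = embed i (aS G a n (S i) j)"
  unfolding aA_def embed_def by (intro restrict_ext) auto

lemma aA_closed: "j \<in> {1..n} \<Longrightarrow> aA G a n m S (i, j) \<in> carrier A"
  unfolding aA_eq_embed by (rule embed_closed[OF aS_closed])

lemma proj_bar_hom: "proj_bar \<in> hom A A_bar"
proof (rule homI)
  fix x assume x: "x \<in> carrier A"
  show "proj_bar x \<in> carrier A_bar" unfolding proj_bar_def A_bar_carrier Gbar_S_carrier
    using x A_carrier by auto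
next
  fix x y assume x: "x \<in> carrier A" and y: "y \<in> carrier A"
  show "proj_bar (x \<otimes>\<^bsub>A\<^esub> y) = proj_bar x \<otimes>\<^bsub>A_bar\<^esub> proj_bar y"
    unfolding proj_bar_def A_mult A_bar_mult
  proof (intro restrict_ext)
    fix i assume i: "i \<in> {1..m}"
    have xi: "x i \<in> carrier (G_S i)" and yi: "y i \<in> carrier (G_S i)" using x y i A_carrier by auto
    show "Z_S i #>\<^bsub>G_S i\<^esub> (\<lambda>i\<in>{1..m}. x i \<otimes>\<^bsub>G_S i\<^esub> y i) i =
        (\<lambda>i\<in>{1..m}. Z_S i #>\<^bsub>G_S i\<^esub> x i) i \<otimes>\<^bsub>GbarS G a n (S i)\<^esub> (\<lambda>i\<in>{1..m}. Z_S i #>\<^bsub>G_S i\<^esub> y i) i"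
      using i hom_mult[OF coset_hom_Z_S xi yi] by simp
  qed
qed

lemma proj_bar_surj: "proj_bar ` carrier A = carrier A_bar"
proof
  show "proj_bar ` carrier A \<subseteq> carrier A_bar" using proj_bar_hom by (auto simp: hom_def)
  show "carrier A_bar \<subseteq> proj_bar ` carrier A"
  proof
    fix y assume y: "y \<in> carrier A_bar"
    define x where "x = (\<lambda>i\<in>{1..m}. SOME g. g \<in> carrier (G_S i) \<and> y i = Z_S i #>\<^bsub>G_S i\<^esub> g)"
    have ex: "\<exists>g. g \<in> carrier (G_S i) \<and> y i = Z_S i #>\<^bsub>G_S i\<^esub> g" if "i \<in> {1..m}" for i
      using y that unfolding A_bar_carrier Gbar_S_carrier by auto
    have xi: "x i \<in> carrier (G_S i) \<and> y i = Z_S i #>\<^bsub>G_S i\<^esub> x i" if "i \<in> {1..m}" for i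
      unfolding x_def using someI_ex[OF ex[OF that]] that by simp
    have "x \<in> carrier A" unfolding A_carrier using xi by (auto simp: x_def)
    moreover have "proj_bar x = y"
    proof -
      have "proj_bar x = (\<lambda>i\<in>{1..m}. y i)" unfolding proj_bar_def using xi by (intro restrict_ext) auto
      also have "\<dots> = y" using y unfolding A_bar_carrier by (simp add: restrict_def PiE_def extensional_def fun_eq_iff)
      finally show ?thesis .
    qed
    ultimately show "y \<in> proj_bar ` carrier A" by blast
  qed
qed

lemma proj_bar_eq_one_iff: assumes x: "x \<in> carrier A"
  shows "proj_bar x = \<one>\<^bsub>A_bar\<^esub> \<longleftrightarrow> (\<forall>i\<in>{1..m}. x i \<in> Z_S i)"
proof -
  have e: "Z_S i #>\<^bsub>G_S i\<^esub> x i = Z_S i \<longleftrightarrow> x i \<in> Z_S i" if i: "i \<in> {1..m}" for i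
  proof -
    interpret GS: group "G_S i" by (rule G_S_group)
    have sg: "subgroup (Z_S i) (G_S i)" using Z_S_normal by (simp add: normal_def)
    have xi: "x i \<in> carrier (G_S i)" using x i A_carrier by auto
    show ?thesis
    proof
      assume "Z_S i #>\<^bsub>G_S i\<^esub> x i = Z_S i"
      then show "x i \<in> Z_S i" using GS.rcos_self[OF xi sg] by simp
    next
      assume "x i \<in> Z_S i"
      then show "Z_S i #>\<^bsub>G_S i\<^esub> x i = Z_S i" using GS.coset_join2[OF xi sg] by simp
    qed
  qed
  show ?thesis unfolding proj_bar_def A_bar_one Gbar_S_one
  proof
    assume h: "(\<lambda>i\<in>{1..m}. Z_S i #>\<^bsub>G_S i\<^esub> x i) = (\<lambda>i\<in>{1..m}. Z_S i)"
    show "\<forall>i\<in>{1..m}. x i \<in> Z_S i"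
    proof
      fix i assume i: "i \<in> {1..m}"
      from fun_cong[OF h, of i] i have "Z_S i #>\<^bsub>G_S i\<^esub> x i = Z_S i" by simp
      then show "x i \<in> Z_S i" using e[OF i] by simp
    qed
  next
    assume "\<forall>i\<in>{1..m}. x i \<in> Z_S i"
    then show "(\<lambda>i\<in>{1..m}. Z_S i #>\<^bsub>G_S i\<^esub> x i) = (\<lambda>i\<in>{1..m}. Z_S i)"
      using e by (intro restrict_ext) auto
  qed
qed

lemma rho_hom: "rho \<in> hom G A"
proof (rule homI)
  fix g assume g: "g \<in> carrier G"
  show "rho g \<in> carrier A" unfolding rho_def A_carrier G_S_carrier using g by auto
next
  fix g h assume g: "g \<in> carrier G" and h: "h \<in> carrier G"
  show "rho (g \<otimes>\<^bsub>G\<^esub> h) = rho g \<otimes>\<^bsub>A\<^esub> rho h"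
    unfolding rho_def A_mult using hom_mult[OF coset_hom_N_S g h] by (intro restrict_ext) simp
qed

lemma proj_bar_rho_z: "proj_bar (rho z) = \<one>\<^bsub>A_bar\<^esub>"
proof -
  have c: "rho z \<in> carrier A" using hom_in_carrier[OF rho_hom z_closed] .
  have "\<forall>i\<in>{1..m}. rho z i \<in> Z_S i"
    unfolding rho_def z_S_eq_coset[symmetric] by (auto intro: generate.incl)
  then show ?thesis using proj_bar_eq_one_iff[OF c] by simp
qed


abbreviation "A_ab \<equiv> abelianization A"
abbreviation "A_comm \<equiv> derived A (carrier A)"

definition coord where "coord x = coA (A_comm #>\<^bsub>A\<^esub> x)"

lemma A_comm_normal: "A_comm \<lhd> A" using group.derived_self_is_normal[OF A_group] .

lemma coset_hom_A_comm: "(\<lambda>x. A_comm #>\<^bsub>A\<^esub> x) \<in> hom A A_ab"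
  unfolding abelianization_def using normal.r_coset_hom_Mod[OF A_comm_normal] .

lemma A_ab_carrier: "carrier A_ab = (\<lambda>x. A_comm #>\<^bsub>A\<^esub> x) ` carrier A"
  unfolding abelianization_def by (rule carrier_FactGroup)

lemma coord_closed: "x \<in> carrier A \<Longrightarrow> coord x \<in> supported_on Edges"
  unfolding coord_def using co_closed A_ab_carrier by auto

lemma coord_int_fun_hom: "int_fun_hom A coord"
proof -
  have "int_fun_hom A (coA \<circ> (\<lambda>x. A_comm #>\<^bsub>A\<^esub> x))"
    using int_fun_hom_comp[OF coset_hom_A_comm co_hom] .
  then show ?thesis unfolding coord_def comp_def .
qed

lemma coord_aA: "p \<in> Edges \<Longrightarrow> coord (aA G a n m S p) = unit_vec p"
  unfolding coord_def using co_basis by blast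

lemma coord_eq_0: assumes x: "x \<in> carrier A" and e: "coord x = 0" shows "x \<in> A_comm"
proof -
  have c: "A_comm #>\<^bsub>A\<^esub> x \<in> carrier A_ab" using A_ab_carrier x by auto
  then have "A_comm #>\<^bsub>A\<^esub> x = \<one>\<^bsub>A_ab\<^esub>" using co_eq_0 e unfolding coord_def by blast
  then have "A_comm #>\<^bsub>A\<^esub> x = A_comm" unfolding abelianization_def by simp
  moreover have "x \<in> A_comm #>\<^bsub>A\<^esub> x"
    using group.rcos_self[OF A_group x] A_comm_normal by (simp add: normal_def)
  ultimately show ?thesis by simp
qed

lemma coord_surj: assumes "c \<in> supported_on Edges" shows "\<exists>x\<in>carrier A. coord x = c"
proof -
  obtain y where y: "y \<in> carrier A_ab" "coA y = c" using co_surj assms by blast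
  then obtain x where "x \<in> carrier A" "y = A_comm #>\<^bsub>A\<^esub> x" using A_ab_carrier by auto
  then show ?thesis using y unfolding coord_def by blast
qed

lemma coord_one: "coord \<one>\<^bsub>A\<^esub> = 0" using group.int_fun_hom_one[OF A_group coord_int_fun_hom] .

text \<open>\<open>sets_vec (unit_vec i)\<close> and \<open>points_vec (unit_vec j)\<close> are the coordinates of \<open>z_S i\<close>
  and of \<open>rho (a j)\<close>, see \<open>coord_embed_z_S\<close> and \<open>coord_rho_a\<close>.\<close>
definition sets_vec :: "(nat \<Rightarrow> int) \<Rightarrow> nat \<times> nat \<Rightarrow> int" where
  "sets_vec \<beta> = (\<lambda>p. if p \<in> Edges then \<beta> (fst p) else 0)"
definition points_vec :: "(nat \<Rightarrow> int) \<Rightarrow> nat \<times> nat \<Rightarrow> int" where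
  "points_vec \<alpha> = (\<lambda>p. if p \<in> Edges then \<alpha> (snd p) else 0)"

lemma coord_restrict_sum:
  assumes x: "x \<in> carrier A"
  shows "finite I \<Longrightarrow> I \<subseteq> {1..m} \<Longrightarrow> coord (\<lambda>i\<in>{1..m}. if i \<in> I then x i else \<one>\<^bsub>G_S i\<^esub>) = (\<Sum>i\<in>I. coord (embed i (x i)))"
proof (induction I rule: finite_induct)
  case empty
  have "(\<lambda>i\<in>{1..m}. if i \<in> {} then x i else \<one>\<^bsub>G_S i\<^esub>) = \<one>\<^bsub>A\<^esub>" unfolding A_one by simp
  then show ?case using coord_one by simp
next
  case (insert k F)
  have k: "k \<in> {1..m}" using insert.prems by auto
  have xi: "x i \<in> carrier (G_S i)" if "i \<in> {1..m}" for i using x that A_carrier by auto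
  let ?tF = "(\<lambda>i\<in>{1..m}. if i \<in> F then x i else \<one>\<^bsub>G_S i\<^esub>)"
  have tF: "?tF \<in> carrier A" unfolding A_carrier using xi group.is_monoid[OF G_S_group]
    by auto
  have eq: "(\<lambda>i\<in>{1..m}. if i \<in> insert k F then x i else \<one>\<^bsub>G_S i\<^esub>) = embed k (x k) \<otimes>\<^bsub>A\<^esub> ?tF"
    unfolding A_mult embed_def
  proof (intro restrict_ext)
    fix i assume i: "i \<in> {1..m}"
    interpret GS: group "G_S i" by (rule G_S_group)
    show "(if i \<in> insert k F then x i else \<one>\<^bsub>G_S i\<^esub>) =
       (\<lambda>i'\<in>{1..m}. if i' = k then x k else \<one>\<^bsub>G_S i'\<^esub>) i \<otimes>\<^bsub>G_S i\<^esub> ?tF i"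
    proof (cases "i = k")
      case True
      have "x k \<otimes>\<^bsub>G_S k\<^esub> \<one>\<^bsub>G_S k\<^esub> = x k" by (rule monoid.r_one[OF group.is_monoid[OF G_S_group] xi[OF k]])
      then show ?thesis using True i insert.hyps(2) by simp
    next
      case False
      show ?thesis using False i xi[OF i] by (simp add: GS.l_one)
    qed
  qed
  have sk: "embed k (x k) \<in> carrier A" by (rule embed_closed[OF xi[OF k]])
  have IH: "coord ?tF = (\<Sum>i\<in>F. coord (embed i (x i)))" by (rule insert.IH) (use insert.prems in auto)
  show ?case unfolding eq int_fun_homD[OF coord_int_fun_hom sk tF] IH by (simp only: sum.insert[OF insert.hyps])
qed

lemma A_restrict: "x \<in> carrier A \<Longrightarrow> (\<lambda>i\<in>{1..m}. if i \<in> {1..m} then x i else \<one>\<^bsub>G_S i\<^esub>) = x"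
  unfolding A_carrier by (auto simp: fun_eq_iff PiE_def extensional_def)

lemma S_memD: "i \<in> {1..m} \<Longrightarrow> j \<in> S i \<Longrightarrow> j \<in> {1..n}" using S_sub by blast
lemma S_memD': "Suc 0 \<le> i \<Longrightarrow> i \<le> m \<Longrightarrow> j \<in> S i \<Longrightarrow> Suc 0 \<le> j \<and> j \<le> n"
  using S_memD[of i j] by simp

lemma finite_edges: "finite Edges"
proof (rule finite_SigmaI)
  show "finite {1..m}" by simp
  fix i assume "i \<in> {1..m}"
  then have "S i \<subseteq> {1..n}" using S_sub by blast
  then show "finite (S i)" by (rule finite_subset) simp
qed

lemma coord_aA_all: assumes "i \<in> {1..m}" "j \<in> {1..n}"
  shows "coord (aA G a n m S (i, j)) = (\<lambda>t. if t = (i, j) \<and> j \<in> S i then 1 else 0)"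
proof (cases "j \<in> S i")
  case True then show ?thesis using coord_aA[of "(i,j)"] assms by (simp add: unit_vec_def)
next
  case False
  have o: "aA G a n m S (i, j) = \<one>\<^bsub>A\<^esub>" unfolding aA_eq_embed aS_outside_S[OF assms(2) False] embed_one ..
  have e: "coord (aA G a n m S (i, j)) = 0" by (subst o) (rule coord_one)
  show ?thesis using e False by (simp add: fun_eq_iff)
qed

lemma coord_embed_z_S: assumes i: "i \<in> {1..m}" shows "coord (embed i (z_S i)) = sets_vec (unit_vec i)"
proof -
  have s: "aS G a n (S i) ` set [1..<Suc n] \<subseteq> carrier (G_S i)" using aS_closed by auto
  have "embed i (z_S i) = embed i (foldr (\<otimes>\<^bsub>G_S i\<^esub>) (map (aS G a n (S i)) [1..<Suc n]) \<one>\<^bsub>G_S i\<^esub>)"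
    by (simp add: zS_def prod_gens_def)
  also have "\<dots> = foldr (\<otimes>\<^bsub>A\<^esub>) (map (embed i \<circ> aS G a n (S i)) [1..<Suc n]) \<one>\<^bsub>A\<^esub>"
    by (rule hom_foldr[OF G_S_group A_group embed_hom s])
  also have "map (embed i \<circ> aS G a n (S i)) [1..<Suc n] = map (\<lambda>j. aA G a n m S (i, j)) [1..<Suc n]"
    by (simp add: aA_eq_embed comp_def)
  finally have e1: "embed i (z_S i) = foldr (\<otimes>\<^bsub>A\<^esub>) (map (\<lambda>j. aA G a n m S (i, j)) [1..<Suc n]) \<one>\<^bsub>A\<^esub>" .
  have s2: "(\<lambda>j. aA G a n m S (i, j)) ` set [1..<Suc n] \<subseteq> carrier A" using aA_closed by auto
  have "coord (embed i (z_S i)) = sum_list (map (coord \<circ> (\<lambda>j. aA G a n m S (i, j))) [1..<Suc n])"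
    unfolding e1 by (rule group.int_fun_hom_foldr[OF A_group coord_int_fun_hom s2])
  also have "\<dots> = (\<Sum>j\<in>{1..n}. coord (aA G a n m S (i, j)))"
    by (simp only: sum_list_distinct_conv_sum_set[OF distinct_upt] set_upt atLeastLessThanSuc_atLeastAtMost comp_def)
  also have "\<dots> = (\<Sum>j\<in>{1..n}. (\<lambda>t. if snd t = j then (if fst t = i \<and> j \<in> S i then 1 else 0) else 0))"
    by (rule sum.cong) (use coord_aA_all[OF i] in \<open>auto simp: fun_eq_iff\<close>)
  also have "\<dots> = sets_vec (unit_vec i)"
  proof (rule ext)
    fix p
    show "(\<Sum>j\<in>{1..n}. (\<lambda>t. if snd t = j then (if fst t = i \<and> j \<in> S i then 1 else 0) else 0)) p = sets_vec (unit_vec i) p"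
      unfolding sum_fun_if_apply[OF finite_atLeastAtMost] sets_vec_def unit_vec_def using i by (cases p) (auto dest: S_memD')
  qed
  finally show ?thesis .
qed

lemma coord_rho_a: assumes j: "j \<in> {1..n}" shows "coord (rho (a j)) = points_vec (unit_vec j)"
proof -
  have r: "rho (a j) \<in> carrier A" using hom_in_carrier[OF rho_hom a_closed[OF j]] .
  have "coord (rho (a j)) = (\<Sum>i\<in>{1..m}. coord (embed i (rho (a j) i)))"
    using coord_restrict_sum[OF r finite_atLeastAtMost order_refl] A_restrict[OF r] by simp
  also have "\<dots> = (\<Sum>i\<in>{1..m}. coord (aA G a n m S (i, j)))"
    by (rule sum.cong) (auto simp: rho_def aA_eq_embed aS_eq_coset)
  also have "\<dots> = (\<Sum>i\<in>{1..m}. (\<lambda>t. if fst t = i then (if snd t = j \<and> j \<in> S i then 1 else 0) else 0))"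
    by (rule sum.cong) (use coord_aA_all j in \<open>auto simp: fun_eq_iff\<close>)
  also have "\<dots> = points_vec (unit_vec j)"
  proof (rule ext)
    fix p
    show "(\<Sum>i\<in>{1..m}. (\<lambda>t. if fst t = i then (if snd t = j \<and> j \<in> S i then 1 else 0) else 0)) p = points_vec (unit_vec j) p"
      unfolding sum_fun_if_apply[OF finite_atLeastAtMost] points_vec_def unit_vec_def by (cases p) auto
  qed
  finally show ?thesis .
qed

lemma coord_z_S_powers:
  "coord (\<lambda>i\<in>{1..m}. z_S i [^]\<^bsub>G_S i\<^esub> (\<beta> i :: int)) = sets_vec \<beta>"
proof -
  let ?x = "(\<lambda>i\<in>{1..m}. z_S i [^]\<^bsub>G_S i\<^esub> (\<beta> i :: int))"
  have xC: "?x \<in> carrier A" unfolding A_carrier using z_S_closed group.int_pow_closed[OF G_S_group] by auto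
  have "coord ?x = (\<Sum>i\<in>{1..m}. coord (embed i (?x i)))"
    using coord_restrict_sum[OF xC finite_atLeastAtMost order_refl] A_restrict[OF xC] by simp
  also have "\<dots> = (\<Sum>i\<in>{1..m}. (\<lambda>t. \<beta> i * sets_vec (unit_vec i) t))"
  proof (rule sum.cong)
    fix i assume i: "i \<in> {1..m}"
    have "embed i (?x i) = embed i (z_S i) [^]\<^bsub>A\<^esub> \<beta> i"
      using i hom_int_pow[OF embed_hom z_S_closed G_S_group A_group] by simp
    then show "coord (embed i (?x i)) = (\<lambda>t. \<beta> i * sets_vec (unit_vec i) t)"
      using group.int_fun_hom_pow[OF A_group coord_int_fun_hom embed_closed[OF z_S_closed]] coord_embed_z_S[OF i] by simp
  qed simp
  also have "\<dots> = (\<Sum>i\<in>{1..m}. (\<lambda>t. if fst t = i then (if t \<in> Edges then \<beta> i else 0) else 0))"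
    by (rule sum.cong) (auto simp: fun_eq_iff sets_vec_def unit_vec_def)
  also have "\<dots> = sets_vec \<beta>"
  proof (rule ext)
    fix p
    show "(\<Sum>i\<in>{1..m}. (\<lambda>t. if fst t = i then (if t \<in> Edges then \<beta> i else 0) else 0)) p = sets_vec \<beta> p"
      unfolding sum_fun_if_apply[OF finite_atLeastAtMost] sets_vec_def by auto
  qed
  finally show ?thesis .
qed

lemma coord_kernel_proj_bar:
  assumes x: "x \<in> carrier A" and k: "\<forall>i\<in>{1..m}. x i \<in> Z_S i"
  shows "\<exists>\<beta>. coord x = sets_vec \<beta>"
proof -
  have ex: "\<exists>b::int. x i = z_S i [^]\<^bsub>G_S i\<^esub> b" if "i \<in> {1..m}" for i
    using k that group.generate_pow[OF G_S_group z_S_closed] by blast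
  define \<beta> where "\<beta> = (\<lambda>i. SOME b::int. x i = z_S i [^]\<^bsub>G_S i\<^esub> b)"
  have "x = (\<lambda>i\<in>{1..m}. z_S i [^]\<^bsub>G_S i\<^esub> \<beta> i)"
  proof (rule ext)
    fix i show "x i = (\<lambda>i\<in>{1..m}. z_S i [^]\<^bsub>G_S i\<^esub> \<beta> i) i"
    proof (cases "i \<in> {1..m}")
      case True then show ?thesis unfolding \<beta>_def using someI_ex[OF ex[OF True]] by simp
    next
      case False then show ?thesis using x unfolding A_carrier by (auto simp: PiE_def extensional_def)
    qed
  qed
  then show ?thesis using coord_z_S_powers by metis
qed

lemma sets_vec_realized: "\<exists>x\<in>carrier A. proj_bar x = \<one>\<^bsub>A_bar\<^esub> \<and> coord x = sets_vec \<beta>"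
proof -
  let ?x = "(\<lambda>i\<in>{1..m}. z_S i [^]\<^bsub>G_S i\<^esub> (\<beta> i :: int))"
  have xC: "?x \<in> carrier A" unfolding A_carrier using z_S_closed group.int_pow_closed[OF G_S_group] by auto
  have "\<forall>i\<in>{1..m}. ?x i \<in> Z_S i" using group.generate_pow[OF G_S_group z_S_closed] by auto
  then show ?thesis using xC proj_bar_eq_one_iff[OF xC] coord_z_S_powers by blast
qed


lemma rho_group_hom: "group_hom G A rho"
  using grp A_group rho_hom by (simp add: group_hom_def group_hom_axioms_def)

lemma points_vec_add: "points_vec \<alpha> + points_vec \<alpha>' = points_vec (\<lambda>j. \<alpha> j + \<alpha>' j)"
  by (auto simp: points_vec_def fun_eq_iff)
lemma points_vec_uminus: "- points_vec \<alpha> = points_vec (\<lambda>j. - \<alpha> j)"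
  by (auto simp: points_vec_def fun_eq_iff)
lemma points_vec_zero: "points_vec (\<lambda>j. 0) = 0"
  by (auto simp: points_vec_def fun_eq_iff)

lemma coord_rho_points_vec: assumes h: "h \<in> carrier G" shows "\<exists>\<alpha>. coord (rho h) = points_vec \<alpha>"
proof -
  interpret rh: group_hom G A rho by (rule rho_group_hom)
  let ?W = "{h \<in> carrier G. \<exists>\<alpha>. coord (rho h) = points_vec \<alpha>}"
  have sg: "subgroup ?W G"
  proof
    show "?W \<subseteq> carrier G" by auto
    show "\<one>\<^bsub>G\<^esub> \<in> ?W" using coord_one points_vec_zero by (metis (mono_tags, lifting) mem_Collect_eq rh.G.one_closed rh.hom_one)
  next
    fix x y assume x: "x \<in> ?W" and y: "y \<in> ?W"
    then obtain \<alpha> \<alpha>' where a: "coord (rho x) = points_vec \<alpha>" "coord (rho y) = points_vec \<alpha>'" by auto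
    have "coord (rho (x \<otimes>\<^bsub>G\<^esub> y)) = coord (rho x) + coord (rho y)"
      using x y int_fun_homD[OF coord_int_fun_hom] by simp
    then show "x \<otimes>\<^bsub>G\<^esub> y \<in> ?W" using a x y points_vec_add by auto
  next
    fix x assume x: "x \<in> ?W"
    then obtain \<alpha> where a: "coord (rho x) = points_vec \<alpha>" by auto
    have "coord (rho (inv\<^bsub>G\<^esub> x)) = - coord (rho x)"
      using x group.int_fun_hom_inv[OF A_group coord_int_fun_hom] by simp
    then show "inv\<^bsub>G\<^esub> x \<in> ?W" using a x points_vec_uminus by auto
  qed
  have "a ` {1..n} \<subseteq> ?W" using coord_rho_a a_closed by auto
  then have "generate G (a ` {1..n}) \<subseteq> ?W" by (rule rh.G.generate_subgroup_incl[OF _ sg])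
  then show ?thesis using h generates by auto
qed

lemma points_vec_realized: "\<exists>h\<in>carrier G. coord (rho h) = points_vec \<alpha>"
proof -
  interpret rh: group_hom G A rho by (rule rho_group_hom)
  have P: "finite J \<Longrightarrow> J \<subseteq> {1..n} \<Longrightarrow> \<exists>h\<in>carrier G. coord (rho h) = points_vec (\<lambda>j. if j \<in> J then \<alpha> j else 0)" for J
  proof (induction J rule: finite_induct)
    case empty
    show ?case using coord_one points_vec_zero by (intro bexI[of _ "\<one>\<^bsub>G\<^esub>"]) auto
  next
    case (insert k F)
    obtain h where h: "h \<in> carrier G" "coord (rho h) = points_vec (\<lambda>j. if j \<in> F then \<alpha> j else 0)"
      using insert by auto
    have k: "k \<in> {1..n}" using insert.prems by auto
    let ?h' = "a k [^]\<^bsub>G\<^esub> \<alpha> k \<otimes>\<^bsub>G\<^esub> h"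
    have akC: "a k [^]\<^bsub>G\<^esub> \<alpha> k \<in> carrier G" using a_closed[OF k] by simp
    have "coord (rho ?h') = coord (rho (a k [^]\<^bsub>G\<^esub> \<alpha> k)) + coord (rho h)"
      using akC h(1) int_fun_homD[OF coord_int_fun_hom] by simp
    also have "coord (rho (a k [^]\<^bsub>G\<^esub> \<alpha> k)) = (\<lambda>t. \<alpha> k * points_vec (unit_vec k) t)"
      using rh.hom_int_pow[OF a_closed[OF k]] group.int_fun_hom_pow[OF A_group coord_int_fun_hom] a_closed[OF k] coord_rho_a[OF k]
      by simp
    also have "(\<lambda>t. \<alpha> k * points_vec (unit_vec k) t) + coord (rho h) = points_vec (\<lambda>j. if j \<in> insert k F then \<alpha> j else 0)"
      unfolding h(2) using insert.hyps(2) by (auto simp: points_vec_def unit_vec_def fun_eq_iff)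
    finally show ?case using akC h(1) by blast
  qed
  obtain h where h: "h \<in> carrier G" "coord (rho h) = points_vec (\<lambda>j. if j \<in> {1..n} then \<alpha> j else 0)"
    using P[OF finite_atLeastAtMost order_refl] by blast
  have "points_vec (\<lambda>j. if j \<in> {1..n} then \<alpha> j else 0) = points_vec \<alpha>"
    unfolding points_vec_def using S_memD by (auto simp: fun_eq_iff)
  then show ?thesis using h by auto
qed

lemma coboundary_eq_vecs: "coboundary Edges Lambda_src Lambda_tgt g = sets_vec (\<lambda>i. g (Inl i)) - points_vec (\<lambda>j. g (Inr j))"
  by (auto simp: coboundary_def sets_vec_def points_vec_def Lambda_src_def Lambda_tgt_def fun_eq_iff)

lemma sets_vec_coboundary: "sets_vec \<beta> = coboundary Edges Lambda_src Lambda_tgt (\<lambda>v. case v of Inl i \<Rightarrow> \<beta> i | Inr j \<Rightarrow> 0)"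
  by (auto simp: coboundary_def sets_vec_def Lambda_src_def Lambda_tgt_def fun_eq_iff)

lemma points_vec_coboundary: "points_vec \<alpha> = coboundary Edges Lambda_src Lambda_tgt (\<lambda>v. case v of Inl i \<Rightarrow> 0 | Inr j \<Rightarrow> - \<alpha> j)"
  by (auto simp: coboundary_def points_vec_def Lambda_src_def Lambda_tgt_def fun_eq_iff)

section \<open>The abelianizations of \<open>Abar\<close> and \<open>Gbar\<close>\<close>

abbreviation "A_bar_ab \<equiv> abelianization A_bar"
abbreviation "A_bar_comm \<equiv> derived A_bar (carrier A_bar)"

lemma A_bar_comm_normal: "A_bar_comm \<lhd> A_bar" using group.derived_self_is_normal[OF A_bar_group] .
lemma A_bar_ab_group: "group A_bar_ab" unfolding abelianization_def by (rule group.derived_quot_is_group[OF A_bar_group])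
lemma A_bar_ab_comm: "comm_group A_bar_ab" unfolding abelianization_def by (rule group.derived_quot_is_comm_group[OF A_bar_group])
lemma coset_hom_A_bar_comm: "(\<lambda>y. A_bar_comm #>\<^bsub>A_bar\<^esub> y) \<in> hom A_bar A_bar_ab"
  unfolding abelianization_def using normal.r_coset_hom_Mod[OF A_bar_comm_normal] .
lemma A_bar_ab_carrier: "carrier A_bar_ab = (\<lambda>y. A_bar_comm #>\<^bsub>A_bar\<^esub> y) ` carrier A_bar"
  unfolding abelianization_def by (rule carrier_FactGroup)


definition ab_proj where "ab_proj x = A_bar_comm #>\<^bsub>A_bar\<^esub> proj_bar x"

lemma ab_proj_hom: "ab_proj \<in> hom A A_bar_ab"
  using hom_compose[OF proj_bar_hom coset_hom_A_bar_comm] unfolding ab_proj_def comp_def .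

lemma ab_proj_surj: "ab_proj ` carrier A = carrier A_bar_ab"
  unfolding A_bar_ab_carrier proj_bar_surj[symmetric] ab_proj_def by auto

lemma ab_proj_kills_derived: "x \<in> A_comm \<Longrightarrow> ab_proj x = \<one>\<^bsub>A_bar_ab\<^esub>"
  by (rule hom_kills_derived[OF A_group A_bar_ab_comm ab_proj_hom])

abbreviation "Z \<equiv> generate G {z}"

lemma Z_normal: "Z \<lhd> G"
  using group.generate_central_normal[OF grp z_closed] central by blast

abbreviation "G_bar \<equiv> Gbar G a n"
abbreviation "G_bar_comm \<equiv> derived G_bar (carrier G_bar)"
abbreviation "G_bar_ab \<equiv> abelianization G_bar"

lemma G_bar_eq: "G_bar = G Mod Z" by (simp add: Gbar_def)
lemma G_bar_group: "group G_bar" unfolding G_bar_eq using normal.factorgroup_is_group[OF Z_normal] .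
lemma coset_hom_Z: "(\<lambda>g. Z #>\<^bsub>G\<^esub> g) \<in> hom G G_bar"
  unfolding G_bar_eq using normal.r_coset_hom_Mod[OF Z_normal] .
lemma G_bar_carrier: "carrier G_bar = (\<lambda>g. Z #>\<^bsub>G\<^esub> g) ` carrier G"
  unfolding G_bar_eq by (rule carrier_FactGroup)
lemma G_bar_comm_normal: "G_bar_comm \<lhd> G_bar" using group.derived_self_is_normal[OF G_bar_group] .
lemma G_bar_ab_group: "group G_bar_ab" unfolding abelianization_def by (rule group.derived_quot_is_group[OF G_bar_group])
lemma coset_hom_G_bar_comm: "(\<lambda>C. G_bar_comm #>\<^bsub>G_bar\<^esub> C) \<in> hom G_bar G_bar_ab"
  unfolding abelianization_def using normal.r_coset_hom_Mod[OF G_bar_comm_normal] .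
lemma G_bar_ab_carrier: "carrier G_bar_ab = (\<lambda>C. G_bar_comm #>\<^bsub>G_bar\<^esub> C) ` carrier G_bar"
  unfolding abelianization_def by (rule carrier_FactGroup)

definition tau where "tau g = ab_proj (rho g)"
definition q where "q g = G_bar_comm #>\<^bsub>G_bar\<^esub> (Z #>\<^bsub>G\<^esub> g)"

lemma tau_hom: "tau \<in> hom G A_bar_ab"
  using hom_compose[OF rho_hom ab_proj_hom] unfolding tau_def comp_def .
lemma q_hom: "q \<in> hom G G_bar_ab"
proof -
  have "(\<lambda>C. G_bar_comm #>\<^bsub>G_bar\<^esub> C) \<circ> (\<lambda>g. Z #>\<^bsub>G\<^esub> g) \<in> hom G G_bar_ab"
    by (rule hom_compose[OF coset_hom_Z coset_hom_G_bar_comm])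
  then show ?thesis unfolding q_def comp_def .
qed

lemma rho_bar_eq: "rho_bar G a n m S C = proj_bar (rho (SOME g. g \<in> C))"
  unfolding rho_bar_def proj_bar_def rho_def by (intro restrict_ext) simp

lemma rho_bar_ab_eq: "rho_bar_ab G a n m S Y = tau (SOME g. g \<in> (SOME C. C \<in> Y))"
  unfolding rho_bar_ab_def tau_def ab_proj_def rho_bar_eq ..

lemma rho_bar_ab_representative:
  assumes Y: "Y \<in> carrier G_bar_ab"
  shows "\<exists>g\<in>carrier G. rho_bar_ab G a n m S Y = tau g \<and> Y = q g"
proof -
  interpret G_bar: group G_bar by (rule G_bar_group)
  interpret G: group G by (rule grp)
  have sgdG: "subgroup G_bar_comm G_bar" using G_bar_comm_normal by (simp add: normal_def)
  have sgZ: "subgroup Z G" using Z_normal by (simp add: normal_def)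
  obtain C0 where C0: "C0 \<in> carrier G_bar" "Y = G_bar_comm #>\<^bsub>G_bar\<^esub> C0" using Y G_bar_ab_carrier by auto
  have "C0 \<in> Y" using G_bar.rcos_self[OF C0(1) sgdG] C0(2) by simp
  define C where "C = (SOME C. C \<in> Y)"
  have CY: "C \<in> Y" unfolding C_def using \<open>C0 \<in> Y\<close> by (rule someI)
  have YC: "Y \<subseteq> carrier G_bar" unfolding C0(2) by (rule G_bar.r_coset_subset_G[OF subgroup.subset[OF sgdG] C0(1)])
  have Cc: "C \<in> carrier G_bar" using CY YC by auto
  have Y2: "Y = G_bar_comm #>\<^bsub>G_bar\<^esub> C" using G_bar.repr_independence[OF CY[unfolded C0(2)] C0(1) sgdG] C0(2) by simp
  obtain g0 where g0: "g0 \<in> carrier G" "C = Z #>\<^bsub>G\<^esub> g0" using Cc G_bar_carrier by auto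
  have "g0 \<in> C" using G.rcos_self[OF g0(1) sgZ] g0(2) by simp
  define g where "g = (SOME g. g \<in> C)"
  have gC: "g \<in> C" unfolding g_def using \<open>g0 \<in> C\<close> by (rule someI)
  have gc: "g \<in> carrier G" using gC g0 G.r_coset_subset_G[OF subgroup.subset[OF sgZ] g0(1)] by auto
  have C2: "C = Z #>\<^bsub>G\<^esub> g" using G.repr_independence[OF gC[unfolded g0(2)] g0(1) sgZ] g0(2) by simp
  have "rho_bar_ab G a n m S Y = tau g" unfolding rho_bar_ab_eq g_def C_def ..
  moreover have "Y = q g" unfolding q_def using Y2 C2 by simp
  ultimately show ?thesis using gc by blast
qed

lemma tau_z: "tau z = \<one>\<^bsub>A_bar_ab\<^esub>"
proof -
  have "tau z = A_bar_comm #>\<^bsub>A_bar\<^esub> \<one>\<^bsub>A_bar\<^esub>" unfolding tau_def ab_proj_def proj_bar_rho_z ..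
  also have "\<dots> = A_bar_comm" by (rule group.coset_mult_one[OF A_bar_group]) (rule group.derived_in_carrier[OF A_bar_group order_refl])
  finally show ?thesis unfolding abelianization_def by simp
qed

lemma tau_factors_through_q:
  assumes g1: "g1 \<in> carrier G" and g2: "g2 \<in> carrier G" and q: "q g1 = q g2"
  shows "tau g1 = tau g2"
proof -
  interpret G: group G by (rule grp)
  interpret qh: group_hom G G_bar_ab q using grp G_bar_ab_group q_hom by (simp add: group_hom_def group_hom_axioms_def)
  interpret th: group_hom G A_bar_ab tau using grp A_bar_ab_group tau_hom by (simp add: group_hom_def group_hom_axioms_def)
  interpret ch: group_hom G G_bar "\<lambda>g. Z #>\<^bsub>G\<^esub> g" using grp G_bar_group coset_hom_Z by (simp add: group_hom_def group_hom_axioms_def)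
  interpret G_bar: group G_bar by (rule G_bar_group)
  have sgZ: "subgroup Z G" using Z_normal by (simp add: normal_def)
  have sgdG: "subgroup G_bar_comm G_bar" using G_bar_comm_normal by (simp add: normal_def)
  define e where "e = g1 \<otimes>\<^bsub>G\<^esub> inv\<^bsub>G\<^esub> g2"
  have ec: "e \<in> carrier G" unfolding e_def using g1 g2 by simp
  have "q e = q g1 \<otimes>\<^bsub>G_bar_ab\<^esub> inv\<^bsub>G_bar_ab\<^esub> (q g2)" unfolding e_def using g1 g2 by simp
  also have "\<dots> = \<one>\<^bsub>G_bar_ab\<^esub>" unfolding q using g2 by simp
  finally have "q e = G_bar_comm" unfolding abelianization_def by simp
  then have ce: "G_bar_comm #>\<^bsub>G_bar\<^esub> (Z #>\<^bsub>G\<^esub> e) = G_bar_comm" unfolding q_def .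
  have ceC: "Z #>\<^bsub>G\<^esub> e \<in> carrier G_bar" using ec G_bar_carrier by auto
  have "Z #>\<^bsub>G\<^esub> e \<in> G_bar_comm" using ch.H.rcos_self[OF ceC sgdG] ce by simp
  moreover have "G_bar_comm = (\<lambda>g. Z #>\<^bsub>G\<^esub> g) ` derived G (carrier G)"
    using ch.derived_img[of "carrier G"] G_bar_carrier by simp
  ultimately obtain d where d: "d \<in> derived G (carrier G)" "Z #>\<^bsub>G\<^esub> e = Z #>\<^bsub>G\<^esub> d" by auto
  have dc: "d \<in> carrier G" using d(1) G.derived_in_carrier[OF order_refl] by auto
  have "e \<in> Z #>\<^bsub>G\<^esub> d" using G.rcos_self[OF ec sgZ] d(2) by simp
  then obtain c where c: "c \<in> Z" "e = c \<otimes>\<^bsub>G\<^esub> d" unfolding r_coset_def by auto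
  have cc: "c \<in> carrier G" using c(1) subgroup.subset[OF sgZ] by auto
  have td: "tau d = \<one>\<^bsub>A_bar_ab\<^esub>" by (rule hom_kills_derived[OF grp A_bar_ab_comm tau_hom d(1)])
  have "{z} \<subseteq> kernel G A_bar_ab tau" using tau_z z_closed by (auto simp: kernel_def)
  then have "Z \<subseteq> kernel G A_bar_ab tau" by (rule G.generate_subgroup_incl[OF _ th.subgroup_kernel])
  then have tc: "tau c = \<one>\<^bsub>A_bar_ab\<^esub>" using c(1) by (auto simp: kernel_def)
  have te: "tau e = \<one>\<^bsub>A_bar_ab\<^esub>" using c(2) cc dc td tc by simp
  have "g1 = e \<otimes>\<^bsub>G\<^esub> g2" unfolding e_def using g1 g2 by (simp add: G.m_assoc)
  then have "tau g1 = tau e \<otimes>\<^bsub>A_bar_ab\<^esub> tau g2" using ec g2 by simp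
  then show ?thesis using te g2 by simp
qed


lemma range_rho_bar_ab: "rho_bar_ab G a n m S ` carrier G_bar_ab = tau ` carrier G"
proof (intro equalityI subsetI)
  fix Y assume "Y \<in> rho_bar_ab G a n m S ` carrier G_bar_ab"
  then show "Y \<in> tau ` carrier G" using rho_bar_ab_representative by blast
next
  fix Y assume "Y \<in> tau ` carrier G"
  then obtain g where g: "g \<in> carrier G" "Y = tau g" by blast
  have "q g \<in> carrier G_bar_ab" using hom_in_carrier[OF q_hom g(1)] .
  then obtain g' where "g' \<in> carrier G" "rho_bar_ab G a n m S (q g) = tau g'" "q g = q g'"
    using rho_bar_ab_representative by blast
  then show "Y \<in> rho_bar_ab G a n m S ` carrier G_bar_ab"
    using tau_factors_through_q[OF g(1)] g \<open>q g \<in> carrier G_bar_ab\<close> by (metis image_eqI)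
qed

end

section \<open>The cokernel of \<open>rho_bar_ab\<close>\<close>

locale cokernel_setting = setting G a n m S coA +
  coboundary_splitting "Sigma {1..m} S" Lambda_src Lambda_tgt K T sec pot
  for G :: "('g, 'x) monoid_scheme" and a n m S coA K T sec pot
begin

lemma finite_K: "finite K" using K_subset finite_edges finite_subset by blast

lemma T_sets_vec: "T (sets_vec \<beta>) = 0" unfolding sets_vec_coboundary by (rule T_coboundary)
lemma T_points_vec: "T (points_vec \<alpha>) = 0" unfolding points_vec_coboundary by (rule T_coboundary)

definition phi where "phi x = T (coord x)"

lemma phi_int_fun_hom: "int_fun_hom A phi"
  unfolding int_fun_hom_def phi_def
  using int_fun_homD[OF coord_int_fun_hom] additive_onD[OF T_additive] coord_closed by auto

lemma phi_closed: "x \<in> carrier A \<Longrightarrow> phi x \<in> supported_on K"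
  unfolding phi_def using T_closed coord_closed by blast

lemma phi_kernel_proj_bar: assumes x: "x \<in> carrier A" and p: "proj_bar x = \<one>\<^bsub>A_bar\<^esub>" shows "phi x = 0"
proof -
  obtain \<beta> where "coord x = sets_vec \<beta>" using coord_kernel_proj_bar[OF x] proj_bar_eq_one_iff[OF x] p by blast
  then show ?thesis unfolding phi_def using T_sets_vec by simp
qed

lemma phi_kernel_ab_proj: assumes x: "x \<in> carrier A" and "ab_proj x = \<one>\<^bsub>A_bar_ab\<^esub>" shows "phi x = 0"
proof -
  interpret A: group A by (rule A_group)
  interpret ph: group_hom A A_bar proj_bar using A_group A_bar_group proj_bar_hom by (simp add: group_hom_def group_hom_axioms_def)
  have "A_bar_comm #>\<^bsub>A_bar\<^esub> proj_bar x = A_bar_comm" using assms(2) unfolding ab_proj_def abelianization_def by simp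
  then have "proj_bar x \<in> A_bar_comm" using group.coset_join1[OF A_bar_group _ _ normal_imp_subgroup[OF A_bar_comm_normal]] x by simp
  then obtain d where d: "d \<in> A_comm" "proj_bar x = proj_bar d" using ph.derived_img[of "carrier A"] proj_bar_surj by auto
  have dC: "d \<in> carrier A" using d(1) A.derived_in_carrier by blast
  have "phi (x \<otimes>\<^bsub>A\<^esub> inv\<^bsub>A\<^esub> d) = 0" using phi_kernel_proj_bar d(2) x dC by simp
  moreover have "phi d = 0" by (rule A.int_fun_hom_kills_derived[OF phi_int_fun_hom d(1)])
  ultimately show ?thesis using int_fun_homD[OF phi_int_fun_hom] A.int_fun_hom_inv[OF phi_int_fun_hom] x dC by simp
qed

definition phi_ab where "phi_ab y = phi (SOME x. x \<in> carrier A \<and> ab_proj x = y)"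

lemma phi_ab_int_fun_hom: "int_fun_hom A_bar_ab phi_ab"
  and phi_ab_val: "x \<in> carrier A \<Longrightarrow> phi_ab (ab_proj x) = phi x"
  using int_fun_hom_factor[OF A_group A_bar_ab_group ab_proj_hom ab_proj_surj phi_int_fun_hom phi_kernel_ab_proj]
  unfolding phi_ab_def by blast+

lemma phi_ab_closed:
  assumes "Y \<in> carrier A_bar_ab" shows "phi_ab Y \<in> supported_on K"
proof -
  obtain x where "x \<in> carrier A" "Y = ab_proj x" using assms ab_proj_surj by blast
  then show ?thesis by (simp add: phi_ab_val phi_closed)
qed

lemma phi_ab_surj: assumes h: "h \<in> supported_on K" shows "\<exists>Y\<in>carrier A_bar_ab. phi_ab Y = h"
proof -
  obtain f where f: "f \<in> supported_on Edges" "T f = h" using T_surj[OF h] by blast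
  obtain x where x: "x \<in> carrier A" "coord x = f" using coord_surj[OF f(1)] by blast
  have "phi_ab (ab_proj x) = h" using phi_ab_val[OF x(1)] x f unfolding phi_def by simp
  then show ?thesis using hom_in_carrier[OF ab_proj_hom x(1)] by blast
qed

lemma phi_ab_tau: assumes g: "g \<in> carrier G" shows "phi_ab (tau g) = 0"
proof -
  obtain \<alpha> where "coord (rho g) = points_vec \<alpha>" using coord_rho_points_vec[OF g] by blast
  then show ?thesis unfolding tau_def using phi_ab_val[OF hom_in_carrier[OF rho_hom g]] T_points_vec
    unfolding phi_def by simp
qed

lemma kernel_phi_ab: "{Y \<in> carrier A_bar_ab. phi_ab Y = 0} = tau ` carrier G"
proof (intro equalityI subsetI)
  fix Y assume "Y \<in> tau ` carrier G"
  then show "Y \<in> {Y \<in> carrier A_bar_ab. phi_ab Y = 0}" using phi_ab_tau hom_in_carrier[OF tau_hom] by auto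
next
  fix Y assume Y: "Y \<in> {Y \<in> carrier A_bar_ab. phi_ab Y = 0}"
  interpret A: group A by (rule A_group)
  interpret A_bar_ab: comm_group A_bar_ab by (rule A_bar_ab_comm)
  interpret ab: group_hom A A_bar_ab ab_proj
    using A_group A_bar_ab.is_group ab_proj_hom by (simp add: group_hom_def group_hom_axioms_def)
  interpret rh: group_hom G A rho by (rule rho_group_hom)
  obtain x where x: "x \<in> carrier A" "Y = ab_proj x" using Y ab_proj_surj by auto
  have "T (coord x) = 0" using phi_ab_val[OF x(1)] x(2) Y unfolding phi_def by simp
  then obtain g0 where "coord x = coboundary Edges Lambda_src Lambda_tgt g0"
    using T_eq_0_iff coord_closed[OF x(1)] by blast
  then have ex: "coord x = sets_vec (\<lambda>i. g0 (Inl i)) - points_vec (\<lambda>j. g0 (Inr j))" unfolding coboundary_eq_vecs .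
  obtain xk where xk: "xk \<in> carrier A" "proj_bar xk = \<one>\<^bsub>A_bar\<^esub>" "coord xk = sets_vec (\<lambda>i. g0 (Inl i))"
    using sets_vec_realized by blast
  obtain h where h: "h \<in> carrier G" "coord (rho h) = points_vec (\<lambda>j. g0 (Inr j))" using points_vec_realized by blast
  define w where "w = x \<otimes>\<^bsub>A\<^esub> inv\<^bsub>A\<^esub> xk \<otimes>\<^bsub>A\<^esub> rho h"
  have wc: "w \<in> carrier A" unfolding w_def using x xk h by simp
  have "coord w = coord x + - coord xk + coord (rho h)"
    unfolding w_def using x(1) xk(1) h(1) int_fun_homD[OF coord_int_fun_hom] A.int_fun_hom_inv[OF coord_int_fun_hom] by simp
  then have "coord w = 0" unfolding ex xk(3) h(2) by simp
  then have "ab_proj w = \<one>\<^bsub>A_bar_ab\<^esub>" using coord_eq_0[OF wc] ab_proj_kills_derived by blast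
  moreover have "ab_proj xk = \<one>\<^bsub>A_bar_ab\<^esub>" using xk(2) unfolding ab_proj_def abelianization_def
    using group.coset_mult_one[OF A_bar_group group.derived_in_carrier[OF A_bar_group order_refl]] by simp
  moreover have "x = w \<otimes>\<^bsub>A\<^esub> rho (inv\<^bsub>G\<^esub> h) \<otimes>\<^bsub>A\<^esub> xk"
    unfolding w_def using x(1) xk(1) h(1) by (simp add: A.m_assoc)
  ultimately have "Y = tau (inv\<^bsub>G\<^esub> h)" unfolding x(2) tau_def using wc xk(1) h(1) by simp
  then show "Y \<in> tau ` carrier G" using h(1) by blast
qed

lemma free_abelian_cokernel:
  "\<exists>B. free_abelian_basis (A_bar_ab Mod (rho_bar_ab G a n m S ` carrier G_bar_ab)) B id \<and> card B = card K"
proof -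
  have "\<exists>B. free_abelian_basis (A_bar_ab Mod {Y \<in> carrier A_bar_ab. phi_ab Y = 0}) B id \<and> card B = card K"
    by (rule free_abelian_quotient_by_kernel[OF A_bar_ab_comm finite_K phi_ab_int_fun_hom phi_ab_closed
          phi_ab_surj[OF unit_vec_supported_on]])
  then show ?thesis unfolding range_rho_bar_ab kernel_phi_ab .
qed

end

theorem mainTheorem15:
  fixes G :: "('g, 'x) monoid_scheme" and a :: "nat \<Rightarrow> 'g"
    and n m :: nat and S :: "nat \<Rightarrow> nat set"
  assumes grp: "group G"
    and gens: "a \<in> {1..n} \<rightarrow> carrier G"
    and generates: "generate G (a ` {1..n}) = carrier G"
    and central: "\<forall>g\<in>carrier G. prod_gens G a n \<otimes>\<^bsub>G\<^esub> g = g \<otimes>\<^bsub>G\<^esub> prod_gens G a n"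
    and S_sub: "\<forall>i\<in>{1..m}. S i \<subseteq> {1..n}"
    and S_ne: "\<forall>i\<in>{1..m}. S i \<noteq> {}"
    and S_int: "\<forall>i\<in>{1..m}. \<forall>r\<in>{1..m}. i \<noteq> r \<longrightarrow> card (S i \<inter> S r) \<le> 1"
    and free_rank: "\<forall>i\<in>{1..m}. free_of_rank (GbarS G a n (S i)) (card (S i) - 1)"
    and free_bases: "\<forall>i\<in>{1..m}. \<forall>j0\<in>S i.
                       free_basis (GbarS G a n (S i)) (S i - {j0}) (abarS G a n (S i))"
    and G_ab: "free_abelian_basis (abelianization G) {1..n}
                 (\<lambda>j. derived G (carrier G) #>\<^bsub>G\<^esub> a j)"
    and A_ab: "free_abelian_basis (abelianization (Aprod G a n m S)) (Sigma {1..m} S)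
                 (\<lambda>ij. derived (Aprod G a n m S) (carrier (Aprod G a n m S))
                         #>\<^bsub>Aprod G a n m S\<^esub> aA G a n m S ij)"
  shows "\<exists>B. free_abelian_basis
               (abelianization (Abar G a n m S)
                  Mod (rho_bar_ab G a n m S ` carrier (abelianization (Gbar G a n)))) B id
           \<and> int (card B) = (\<Sum>i\<in>{1..m}. int (card (S i))) - int n - int m
                             + int (num_components (Lambda_vertices m n) (Lambda_edges m S))"
  \<comment> \<open>Only the freeness of \<open>A_ab\<close> enters the computation; the hypotheses on the \<open>S i\<close> and on the
    groups \<open>Gbar_S\<close> are what guarantee it in the intended applications.\<close>
proof -
  obtain coA where coords: "coordinates (abelianization (Aprod G a n m S)) (Sigma {1..m} S)
      (\<lambda>ij. derived (Aprod G a n m S) (carrier (Aprod G a n m S)) #>\<^bsub>Aprod G a n m S\<^esub> aA G a n m S ij) coA"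
    using free_abelian_basis_coordinates[OF A_ab] by blast
  have setting: "setting G a n m S coA"
    by (intro setting.intro setting_axioms.intro coords grp gens generates central S_sub)
  interpret setting G a n m S coA by (rule setting)
  let ?V = "Lambda_vertices m n"
  have "finite ?V" by (simp add: Lambda_vertices_def)
  moreover have "\<forall>d\<in>Sigma {1..m} S. Lambda_src d \<in> ?V \<and> Lambda_tgt d \<in> ?V"
    using S_memD by (auto simp: Lambda_vertices_def Lambda_src_def Lambda_tgt_def)
  ultimately obtain K T sec pot where split: "coboundary_splitting (Sigma {1..m} S) Lambda_src Lambda_tgt K T sec pot"
    and card_K: "card K + card ?V = card (Sigma {1..m} S)
       + card (?V // ((edge_rel (Sigma {1..m} S) Lambda_src Lambda_tgt)\<^sup>* \<inter> ?V \<times> ?V))"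
    using coboundary_splitting_exists[OF finite_edges] by blast
  interpret cokernel_setting G a n m S coA K T sec pot
    by (intro cokernel_setting.intro setting split)
  obtain B where B: "free_abelian_basis (A_bar_ab Mod (rho_bar_ab G a n m S ` carrier G_bar_ab)) B id"
    and card_B: "card B = card K"
    using free_abelian_cokernel by blast
  have "card (Sigma {1..m} S) = (\<Sum>i\<in>{1..m}. card (S i))"
    using S_sub by (intro card_SigmaI) (auto intro: finite_subset)
  moreover have "card ?V = m + n"
  proof -
    have "card ?V = card (Inl ` {1..m} :: (nat + nat) set) + card (Inr ` {1..n} :: (nat + nat) set)"
      unfolding Lambda_vertices_def by (rule card_Un_disjoint) auto
    then show ?thesis by (simp add: card_image)
  qed
  moreover have "num_components ?V (Lambda_edges m S)
      = card (?V // ((edge_rel (Sigma {1..m} S) Lambda_src Lambda_tgt)\<^sup>* \<inter> ?V \<times> ?V))"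
    unfolding num_components_def Lambda_edges_eq ..
  ultimately have "int (card B) + int m + int n
      = int (\<Sum>i\<in>{1..m}. card (S i)) + int (num_components ?V (Lambda_edges m S))"
    using card_K card_B by linarith
  then have "int (card B) = (\<Sum>i\<in>{1..m}. int (card (S i))) - int n - int m
      + int (num_components ?V (Lambda_edges m S))"
    unfolding of_nat_sum by linarith
  with B show ?thesis by blast
qed

end
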